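(* Under the standing setup, there is a constant $c\ge0$ depending only on the symbol $f$ such that for every $k\in\{-q+1,\dots,p-1\}$ and every $n\ge1$, the polynomial $P_{k,n}(\lambda)=\det T_n\big(z^{-k}(f(z)-\lambda)\big)$ satisfies: (a) if $\lambda_1\in\mathbb C$, then $P_{k,n}$ is divisible by $(\lambda-\lambda_1)^{\lceil m_{1,k}n-c\rceil}$ (trivially if this exponent is $\le 0$); if $\lambda_1=\infty$, then $\deg P_{k,n}\le(1-m_{1,k})n+c$; (b) if $\lambda_2\in\mathbb C$, then $P_{k,n}$ is divisible by $(\lambda-\lambda_2)^{\lceil m_{2,k}n-c\rceil}$; if $\lambda_2=\infty$, then $\deg P_{k,n}\le(1-m_{2,k})n+c$; (c) if $Q_{k,n}$ denotes the polynomial obtained from $P_{k,n}$ by removing all its factors $(\lambda-\lambda_1)$ (if $\lambda_1\in\mathbb C$) and $(\lambda-\lambda_2)$ (if $\lambda_2\in\mathbb C$), then $\deg Q_{k,n}\le m_kn+2c$.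
   Context: Standing setup. Let $A,B_1,B_2$ be complex polynomials such that all roots of $B_1$ lie in $\{|z|<1\}$, all roots of $B_2$ lie in $\{|z|>1\}$, and $A$ has no common root with $B_1B_2$. Put $f(z)=A(z)/(B_1(z)B_2(z))$ for $|z|=1$, with Fourier coefficients $f_k=\frac1{2\pi}\int_0^{2\pi}f(e^{it})e^{-ikt}\,dt$; for an integrable function $g$ on the unit circle, $T_n(g)$ denotes the $n\times n$ Toeplitz matrix $(g_{i-j})_{i,j=1}^n$ where $g_m$ are the Fourier coefficients of $g$. Let $q=\deg B_1$ and $p=\max(\deg A,\deg(B_1B_2))-q$; assume $p,q\ge1$ and $\gcd\{k: f_k\ne0\}=1$. For $\lambda\in\mathbb C$ write $A_\lambda(z)=A(z)-\lambda B_1(z)B_2(z)=\sum_{k=-q}^{p}(a_k-\lambda b_k)z^{q+k}$. Define $\lambda_1,\lambda_2\in\mathbb C\cup\{\infty\}$ by $a_{-q}-b_{-q}\lambda_1=0$, $a_p-b_p\lambda_2=0$ (convention: $a_k-b_k\lambda=0$ when $b_k=0$, $\lambda=\infty$). Let $k_1\in\{1,\dots,p+q\}$ be maximal with $a_k-b_k\lambda_1=0$ for $k=-q,\dots,-q+k_1-1$, and $k_2\in\{1,\dots,p+q\}$ maximal with $a_k-b_k\lambda_2=0$ for $k=p-k_2+1,\dots,p$. Set $m_{1,k}=\max(1-\frac{q+k}{k_1},0)$, $m_{2,k}=\max(1-\frac{p-k}{k_2},0)$, $m_k=1-m_{1,k}-m_{2,k}$. *)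

theory Defs
  imports "HOL-Analysis.Analysis" "HOL-Computational_Algebra.Polynomial"
    "Jordan_Normal_Form.Determinant"
begin

definition fourier_coeff :: "(complex \<Rightarrow> complex) \<Rightarrow> int \<Rightarrow> complex" where
  "fourier_coeff g m =
     integral {0..2*pi} (\<lambda>t. g (cis t) * cis (- (of_int m * t))) / complex_of_real (2*pi)"

text \<open>n x n Toeplitz matrix (g_{i-j}); 0-based indices, which gives the same entries.\<close>
definition toeplitz :: "nat \<Rightarrow> (complex \<Rightarrow> complex) \<Rightarrow> complex mat" where
  "toeplitz n g = Matrix.mat n n (\<lambda>(i,j). fourier_coeff g (int i - int j))"

definition symb :: "complex poly \<Rightarrow> complex poly \<Rightarrow> complex poly \<Rightarrow> complex \<Rightarrow> complex" where
  "symb A B1 B2 z = poly A z / poly (B1 * B2) z"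

definition qq :: "complex poly \<Rightarrow> nat" where
  "qq B1 = degree B1"

definition pp :: "complex poly \<Rightarrow> complex poly \<Rightarrow> complex poly \<Rightarrow> nat" where
  "pp A B1 B2 = max (degree A) (degree (B1 * B2)) - degree B1"

text \<open>a_j and b_j for j in {-q..p}: A(z) = sum a_j z^{q+j}, B1B2(z) = sum b_j z^{q+j}.\<close>
definition ca :: "complex poly \<Rightarrow> complex poly \<Rightarrow> int \<Rightarrow> complex" where
  "ca A B1 j = coeff A (nat (int (degree B1) + j))"

definition cb :: "complex poly \<Rightarrow> complex poly \<Rightarrow> int \<Rightarrow> complex" where
  "cb B1 B2 j = coeff (B1 * B2) (nat (int (degree B1) + j))"

text \<open>a_j - b_j lambda = 0, with lambda in C \<union> {infinity} (None = infinity, meaning b_j = 0).\<close>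
definition vanish :: "complex poly \<Rightarrow> complex poly \<Rightarrow> complex poly \<Rightarrow> int \<Rightarrow> complex option \<Rightarrow> bool" where
  "vanish A B1 B2 j l = (case l of None \<Rightarrow> cb B1 B2 j = 0
                                  | Some \<mu> \<Rightarrow> ca A B1 j - cb B1 B2 j * \<mu> = 0)"

definition lam1 :: "complex poly \<Rightarrow> complex poly \<Rightarrow> complex poly \<Rightarrow> complex option" where
  "lam1 A B1 B2 = (let j = - int (qq B1) in
     if cb B1 B2 j = 0 then None else Some (ca A B1 j / cb B1 B2 j))"

definition lam2 :: "complex poly \<Rightarrow> complex poly \<Rightarrow> complex poly \<Rightarrow> complex option" where
  "lam2 A B1 B2 = (let j = int (pp A B1 B2) in
     if cb B1 B2 j = 0 then None else Some (ca A B1 j / cb B1 B2 j))"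

definition kk1 :: "complex poly \<Rightarrow> complex poly \<Rightarrow> complex poly \<Rightarrow> nat" where
  "kk1 A B1 B2 = Max {\<kappa> \<in> {1..pp A B1 B2 + qq B1}.
     \<forall>j \<in> {- int (qq B1) .. - int (qq B1) + int \<kappa> - 1}. vanish A B1 B2 j (lam1 A B1 B2)}"

definition kk2 :: "complex poly \<Rightarrow> complex poly \<Rightarrow> complex poly \<Rightarrow> nat" where
  "kk2 A B1 B2 = Max {\<kappa> \<in> {1..pp A B1 B2 + qq B1}.
     \<forall>j \<in> {int (pp A B1 B2) - int \<kappa> + 1 .. int (pp A B1 B2)}. vanish A B1 B2 j (lam2 A B1 B2)}"

definition m1 :: "complex poly \<Rightarrow> complex poly \<Rightarrow> complex poly \<Rightarrow> int \<Rightarrow> real" where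
  "m1 A B1 B2 k = max (1 - real_of_int (int (qq B1) + k) / real (kk1 A B1 B2)) 0"

definition m2 :: "complex poly \<Rightarrow> complex poly \<Rightarrow> complex poly \<Rightarrow> int \<Rightarrow> real" where
  "m2 A B1 B2 k = max (1 - real_of_int (int (pp A B1 B2) - k) / real (kk2 A B1 B2)) 0"

definition mm :: "complex poly \<Rightarrow> complex poly \<Rightarrow> complex poly \<Rightarrow> int \<Rightarrow> real" where
  "mm A B1 B2 k = 1 - m1 A B1 B2 k - m2 A B1 B2 k"

definition strip_root :: "complex option \<Rightarrow> complex poly \<Rightarrow> complex poly" where
  "strip_root l P = (case l of None \<Rightarrow> P | Some \<mu> \<Rightarrow> P div [:-\<mu>, 1:] ^ order \<mu> P)"

end

theory Submission
  imports Defs "HOL-Computational_Algebra.Fundamental_Theorem_Algebra"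
begin

text \<open>
  Write H(\<lambda>) = T_n(z^{-k}(f - \<lambda>)).  Since f = A/(B1 B2), the function
  B1 B2 z^{-k}(f - \<lambda>) is the Laurent polynomial z^{-k} L_\<lambda> with L_\<lambda> = A - \<lambda> B1 B2.
  Multiplying H(\<lambda>) on the left by the lower triangular Toeplitz matrix of B2 and on
  the right by the upper triangular Toeplitz matrix of z^{-q} B1 (or the other way round)
  changes the determinant only by the nonzero constant (B2(0) lc(B1))^n.  Because the roots
  of B2 lie outside and those of B1 inside the unit circle, a Wiener-Hopf type argument
  shows that the product matrix is banded: apart from d rows and q columns its (i,j) entry
  is the coefficient a_{i-j+k} - \<lambda> b_{i-j+k} of L_\<lambda>, and below (resp. above) a fixed
  diagonal it vanishes.  Every entry is a polynomial of degree at most one in \<lambda>.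

  Expanding the determinant by the Leibniz formula, the displacements i - \<sigma>(i) of any
  permutation \<sigma> sum to zero; a counting argument then shows that at least
  m_{1,k} n - c factors of every nonzero Leibniz term lie in the band where
  a_j - \<lambda>_1 b_j = 0, i.e. are divisible by \<lambda> - \<lambda>_1 (or are constant when \<lambda>_1 = \<infinity>).
  This gives (a); (b) is symmetric, using the other product order, and (c) follows
  from (a) and (b) by comparing degrees, since the two endpoint bands cannot overlap
  unless m_{1,k} or m_{2,k} vanishes.
\<close>

section \<open>Displacements of permutations\<close>

lemma displacement_count_int:
  fixes Dd :: "nat \<Rightarrow> int" and s \<kappa> C :: int
  assumes sum0: "(\<Sum>i<n. Dd i) = 0"
    and X: "X \<subseteq> {..<n}" and X_low: "\<forall>i\<in>X. Dd i \<ge> - C"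
    and band: "\<forall>i<n. i \<notin> X \<longrightarrow> Dd i \<ge> - s"
  defines "Lo \<equiv> {i. i < n \<and> i \<notin> X \<and> Dd i < \<kappa> - s}"
  shows "\<kappa> * int (card Lo) \<ge> (\<kappa> - s) * (int n - int (card X)) - C * int (card X)"
proof -
  define R where "R = {i. i < n \<and> i \<notin> X \<and> \<not> Dd i < \<kappa> - s}"
  have fin: "finite X" "finite Lo" "finite R"
    using X finite_subset by (auto simp: Lo_def R_def)
  have split: "{..<n} = X \<union> (Lo \<union> R)" "X \<inter> (Lo \<union> R) = {}" "Lo \<inter> R = {}"
    using X by (auto simp: Lo_def R_def)
  have card_n: "n = card X + card Lo + card R"
    using arg_cong[OF split(1), of card] fin split(2,3) by (simp add: card_Un_disjoint)
  have "0 = (\<Sum>i\<in>X. Dd i) + (\<Sum>i\<in>Lo. Dd i) + (\<Sum>i\<in>R. Dd i)"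
    using sum0 fin split by (simp add: sum.union_disjoint)
  moreover have "(\<Sum>i\<in>X. Dd i) \<ge> (\<Sum>i\<in>X. - C)" using X_low by (intro sum_mono) auto
  moreover have "(\<Sum>i\<in>Lo. Dd i) \<ge> (\<Sum>i\<in>Lo. - s)" using band by (intro sum_mono) (auto simp: Lo_def)
  moreover have "(\<Sum>i\<in>R. Dd i) \<ge> (\<Sum>i\<in>R. \<kappa> - s)" by (intro sum_mono) (auto simp: R_def)
  ultimately show ?thesis using card_n by (simp add: algebra_simps)
qed

lemma density_bound:
  fixes L x n e \<kappa> s C :: real
  assumes count: "\<kappa> * L \<ge> (\<kappa> - s) * (n - x) - C * x"
    and "0 \<le> x" "x \<le> e" "x \<le> n" "1 \<le> \<kappa>" "0 \<le> C" "0 \<le> s" "0 \<le> L"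
  shows "L \<ge> max (1 - s / \<kappa>) 0 * n - e * (1 + C)"
proof (cases "s \<le> \<kappa>")
  case True
  define m where "m = 1 - s / \<kappa>"
  have m: "0 \<le> m" "m \<le> 1" "max (1 - s / \<kappa>) 0 = m"
    using True assms by (auto simp: m_def field_simps)
  have "L \<ge> m * (n - x) - C * x / \<kappa>"
  proof -
    have "(\<kappa> - s) * (n - x) - C * x = \<kappa> * (m * (n - x) - C * x / \<kappa>)"
      using assms by (simp add: m_def field_simps)
    then show ?thesis using count assms by (simp add: mult_le_cancel_left_pos)
  qed
  moreover have "C * x / \<kappa> \<le> C * x"
  proof -
    have "C * x \<le> C * x * \<kappa>" using mult_left_mono[of 1 \<kappa> "C * x"] assms by simp
    then show ?thesis using assms by (intro mult_imp_div_pos_le) auto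
  qed
  moreover have "m * x \<le> x" "C * x \<le> C * e"
    using m assms by (simp_all add: mult_left_le_one_le mult_left_mono)
  ultimately show ?thesis using m assms by (simp add: algebra_simps)
next
  case False
  then have "max (1 - s / \<kappa>) 0 * n = 0" using assms by (simp add: field_simps)
  moreover have "0 \<le> e * (1 + C)" using assms by simp
  ultimately show ?thesis using \<open>0 \<le> L\<close> by linarith
qed

lemma displacement_counting:
  fixes Dd :: "nat \<Rightarrow> int" and s \<kappa> C :: int
  assumes sum0: "(\<Sum>i<n. Dd i) = 0"
    and X: "X \<subseteq> {..<n}" and X_card: "card X \<le> e"
    and X_low: "\<forall>i\<in>X. Dd i \<ge> - C" and C: "C \<ge> 0"
    and band: "\<forall>i<n. i \<notin> X \<longrightarrow> Dd i \<ge> - s"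
    and \<kappa>: "\<kappa> > 0" and s: "s \<ge> 0"
  shows "real (card {i. i < n \<and> i \<notin> X \<and> Dd i < \<kappa> - s}) \<ge>
           max (1 - real_of_int s / real_of_int \<kappa>) 0 * real n - real e * (1 + real_of_int C)"
proof (rule density_bound)
  let ?Lo = "{i. i < n \<and> i \<notin> X \<and> Dd i < \<kappa> - s}"
  have "\<kappa> * int (card ?Lo) \<ge> (\<kappa> - s) * (int n - int (card X)) - C * int (card X)"
    by (rule displacement_count_int[OF sum0 X X_low band])
  then have "real_of_int ((\<kappa> - s) * (int n - int (card X)) - C * int (card X))
      \<le> real_of_int (\<kappa> * int (card ?Lo))"
    by (simp only: of_int_le_iff)
  then show "real_of_int \<kappa> * real (card ?Lo) \<ge>
      (real_of_int \<kappa> - real_of_int s) * (real n - real (card X)) - real_of_int C * real (card X)"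
    by simp
  show "real (card X) \<le> real n"
    using card_mono[OF _ X] by simp
qed (use X_card C \<kappa> s in auto)

lemma permutation_displacement_sum:
  assumes "\<sigma> permutes {0..<n}"
  shows "(\<Sum>i<n. int i - int (\<sigma> i)) = 0"
proof -
  have "(\<Sum>i\<in>{0..<n}. int (\<sigma> i)) = (\<Sum>i\<in>{0..<n}. int i)"
    using sum.permute[OF assms, of int] by (simp add: comp_def)
  then show ?thesis by (simp add: sum_subtractf atLeast0LessThan)
qed

lemma card_exceptional_rows_cols:
  fixes \<sigma> :: "nat \<Rightarrow> nat"
  assumes \<sigma>: "\<sigma> permutes {0..<n}"
    and "card {i. i < n \<and> R i} \<le> ea" "card {j. j < n \<and> Cc j} \<le> eb"
  shows "card {i. i < n \<and> (R i \<or> Cc (\<sigma> i))} \<le> ea + eb"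
proof -
  have "card {i. i < n \<and> Cc (\<sigma> i)} \<le> card {j. j < n \<and> Cc j}"
  proof (rule card_inj_on_le)
    show "inj_on \<sigma> {i. i < n \<and> Cc (\<sigma> i)}"
      using permutes_inj[OF \<sigma>] by (simp add: inj_on_def inj_def)
    show "\<sigma> ` {i. i < n \<and> Cc (\<sigma> i)} \<subseteq> {j. j < n \<and> Cc j}"
      using permutes_in_image[OF \<sigma>] by auto
  qed simp
  moreover have "card {i. i < n \<and> (R i \<or> Cc (\<sigma> i))}
      \<le> card {i. i < n \<and> R i} + card {i. i < n \<and> Cc (\<sigma> i)}"
    using card_Un_le[of "{i. i < n \<and> R i}" "{i. i < n \<and> Cc (\<sigma> i)}"]
    by (simp add: Collect_disj_eq[symmetric] conj_disj_distribL)
  ultimately show ?thesis using assms(2,3) by linarith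
qed

lemma permutation_many_good_entries:
  fixes E :: "nat \<Rightarrow> nat \<Rightarrow> 'a::zero" and \<delta> :: "nat \<Rightarrow> nat \<Rightarrow> int" and s \<kappa> C :: int
  assumes \<sigma>: "\<sigma> permutes {0..<n}"
    and nz: "\<forall>i<n. E i (\<sigma> i) \<noteq> 0"
    and sum0: "(\<Sum>i<n. \<delta> i (\<sigma> i)) = 0"
    and cR: "card {i. i < n \<and> R i} \<le> ea" and cC: "card {j. j < n \<and> Cc j} \<le> eb"
    and exc: "\<forall>i<n. \<forall>j<n. (R i \<or> Cc j) \<longrightarrow> E i j \<noteq> 0 \<longrightarrow> \<delta> i j \<ge> - C"
    and bnd: "\<forall>i<n. \<forall>j<n. \<not> (R i \<or> Cc j) \<longrightarrow> E i j \<noteq> 0 \<longrightarrow> \<delta> i j \<ge> - s"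
    and good: "\<forall>i<n. \<forall>j<n. \<not> (R i \<or> Cc j) \<longrightarrow> \<delta> i j < \<kappa> - s \<longrightarrow> G (E i j)"
    and C: "C \<ge> 0" and \<kappa>: "\<kappa> > 0" and s: "s \<ge> 0"
  shows "\<exists>Lo \<subseteq> {..<n}.
           real (card Lo) \<ge> max (1 - real_of_int s / real_of_int \<kappa>) 0 * real n - real (ea + eb) * (1 + real_of_int C)
         \<and> (\<forall>i\<in>Lo. G (E i (\<sigma> i)))"
proof -
  define X where "X = {i. i < n \<and> (R i \<or> Cc (\<sigma> i))}"
  define Lo where "Lo = {i. i < n \<and> i \<notin> X \<and> \<delta> i (\<sigma> i) < \<kappa> - s}"
  have \<sigma>_lt: "\<And>i. i < n \<Longrightarrow> \<sigma> i < n" using permutes_in_image[OF \<sigma>] by auto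
  have "real (card Lo) \<ge> max (1 - real_of_int s / real_of_int \<kappa>) 0 * real n - real (ea + eb) * (1 + real_of_int C)"
    unfolding Lo_def
  proof (rule displacement_counting[OF sum0 _ _ _ C _ \<kappa> s])
    show "card X \<le> ea + eb" unfolding X_def by (rule card_exceptional_rows_cols[OF \<sigma> cR cC])
    show "X \<subseteq> {..<n}" by (auto simp: X_def)
    show "\<forall>i\<in>X. - C \<le> \<delta> i (\<sigma> i)" using exc \<sigma>_lt nz by (auto simp: X_def)
    show "\<forall>i<n. i \<notin> X \<longrightarrow> - s \<le> \<delta> i (\<sigma> i)" using bnd \<sigma>_lt nz by (auto simp: X_def)
  qed
  moreover have "\<forall>i\<in>Lo. G (E i (\<sigma> i))" using good \<sigma>_lt by (auto simp: Lo_def X_def)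
  moreover have "Lo \<subseteq> {..<n}" by (auto simp: Lo_def)
  ultimately show ?thesis by blast
qed

section \<open>Removing the factors belonging to a root\<close>

definition endpoint_bound :: "complex option \<Rightarrow> real \<Rightarrow> real \<Rightarrow> nat \<Rightarrow> complex poly \<Rightarrow> bool" where
  "endpoint_bound l m c n P =
     (case l of Some \<mu> \<Rightarrow> [:-\<mu>, 1:] ^ nat \<lceil>m * real n - c\<rceil> dvd P
      | None \<Rightarrow> real (degree P) \<le> (1 - m) * real n + c)"

lemma endpoint_bound_smult:
  assumes "a \<noteq> 0"
  shows "endpoint_bound l m c n (Polynomial.smult a P) = endpoint_bound l m c n P"
  using assms by (simp add: endpoint_bound_def dvd_smult_iff split: option.splits)

text \<open>How much of the degree budget n is accounted for by the point l: the multiplicity of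
  the root l, or, for l = \<infinity>, the defect n - deg P.\<close>
definition root_deficit :: "complex option \<Rightarrow> nat \<Rightarrow> complex poly \<Rightarrow> real" where
  "root_deficit l n P = (case l of None \<Rightarrow> real n - real (degree P) | Some \<mu> \<Rightarrow> real (order \<mu> P))"

lemma root_deficit_ge:
  assumes "P \<noteq> 0" "endpoint_bound l m c n P"
  shows "m * real n - c \<le> root_deficit l n P"
proof (cases l)
  case None
  then show ?thesis using assms(2) by (simp add: endpoint_bound_def root_deficit_def algebra_simps)
next
  case (Some \<mu>)
  then have "nat \<lceil>m * real n - c\<rceil> \<le> order \<mu> P"
    using assms order_divides[of \<mu> "nat \<lceil>m * real n - c\<rceil>" P] by (simp add: endpoint_bound_def)
  then show ?thesis using Some by (simp add: root_deficit_def)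
qed

lemma strip_root_Some:
  fixes P :: "complex poly"
  assumes P: "P \<noteq> 0"
  shows "degree P = order \<mu> P + degree (strip_root (Some \<mu>) P)"
    and "strip_root (Some \<mu>) P \<noteq> 0"
    and "order \<mu> (strip_root (Some \<mu>) P) = 0"
    and "\<And>\<nu>. \<nu> \<noteq> \<mu> \<Longrightarrow> order \<nu> (strip_root (Some \<mu>) P) = order \<nu> P"
proof -
  define X where "X = [:-\<mu>, 1:] ^ order \<mu> P"
  define Q where "Q = P div X"
  have sQ: "strip_root (Some \<mu>) P = Q" unfolding strip_root_def Q_def X_def by simp
  have PXQ: "P = X * Q"
    unfolding Q_def X_def using order_1[of \<mu> P] by (simp add: dvd_div_mult_self mult.commute)
  have Q0: "Q \<noteq> 0" using P PXQ by auto
  have X0: "X \<noteq> 0" unfolding X_def by simp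
  have "degree P = degree X + degree Q" using PXQ X0 Q0 by (simp add: degree_mult_eq)
  then show "degree P = order \<mu> P + degree (strip_root (Some \<mu>) P)"
    using sQ by (simp add: X_def degree_linear_power)
  show "strip_root (Some \<mu>) P \<noteq> 0" using sQ Q0 by simp
  have "order \<mu> P = order \<mu> X + order \<mu> Q" using PXQ P order_mult[of X Q \<mu>] by simp
  then show "order \<mu> (strip_root (Some \<mu>) P) = 0"
    using sQ by (simp add: X_def order_power_n_n)
  fix \<nu> assume "\<nu> \<noteq> \<mu>"
  then have "order \<nu> X = 0" unfolding X_def by (intro order_0I) simp
  moreover have "order \<nu> P = order \<nu> X + order \<nu> Q" using PXQ P order_mult[of X Q \<nu>] by simp
  ultimately show "order \<nu> (strip_root (Some \<mu>) P) = order \<nu> P" using sQ by simp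
qed

lemma strip_root_0 [simp]: "strip_root l 0 = 0"
  unfolding strip_root_def by (auto split: option.splits)

lemma degree_strip_distinct_roots:
  fixes P :: "complex poly"
  assumes P: "P \<noteq> 0" and deg: "degree P \<le> n" and l: "l1 \<noteq> l2"
  shows "real (degree (strip_root l2 (strip_root l1 P)))
           \<le> real n - root_deficit l1 n P - root_deficit l2 n P"
proof (cases l1)
  case None
  then obtain \<mu> where "l2 = Some \<mu>" using l by (cases l2) auto
  then show ?thesis using None strip_root_Some(1)[OF P, where \<mu>=\<mu>]
    by (simp add: root_deficit_def strip_root_def[of None])
next
  case (Some \<mu>1)
  note S1 = strip_root_Some[OF P, where \<mu>=\<mu>1]
  show ?thesis
  proof (cases l2)
    case None
    then show ?thesis using Some S1(1)
      by (simp add: root_deficit_def strip_root_def[of None])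
  next
    case (Some \<mu>2)
    then have "\<mu>2 \<noteq> \<mu>1" using l \<open>l1 = Some \<mu>1\<close> by auto
    then have "order \<mu>2 (strip_root (Some \<mu>1) P) = order \<mu>2 P" by (rule S1(4))
    then show ?thesis
      using Some \<open>l1 = Some \<mu>1\<close> S1 strip_root_Some(1)[OF S1(2), where \<mu>=\<mu>2] deg
      by (simp add: root_deficit_def)
  qed
qed

lemma degree_strip_same_root:
  fixes P :: "complex poly"
  assumes P: "P \<noteq> 0" and deg: "degree P \<le> n"
  shows "real (degree (strip_root l (strip_root l P))) \<le> real n - root_deficit l n P"
proof (cases l)
  case None
  then show ?thesis by (simp add: root_deficit_def strip_root_def)
next
  case (Some \<mu>)
  note S = strip_root_Some[OF P, where \<mu>=\<mu>]
  have "strip_root (Some \<mu>) (strip_root (Some \<mu>) P) = strip_root (Some \<mu>) P"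
    using S(3) by (simp add: strip_root_def[of "Some \<mu>" "strip_root (Some \<mu>) P"])
  then show ?thesis using Some S(1) deg by (simp add: root_deficit_def)
qed

lemma degree_strip_both_endpoints:
  fixes P :: "complex poly" and m1 m2 c :: real
  assumes deg: "degree P \<le> n" and c: "c \<ge> 0"
    and m: "0 \<le> m1" "0 \<le> m2" "m1 + m2 \<le> 1"
    and bound1: "endpoint_bound l1 m1 c n P" and bound2: "endpoint_bound l2 m2 c n P"
    and distinct: "m1 > 0 \<Longrightarrow> m2 > 0 \<Longrightarrow> l1 \<noteq> l2"
  shows "real (degree (strip_root l2 (strip_root l1 P))) \<le> (1 - m1 - m2) * real n + 2 * c"
proof (cases "P = 0")
  case True
  then show ?thesis using m c by simp
next
  case P: False
  have d1: "m1 * real n - c \<le> root_deficit l1 n P" by (rule root_deficit_ge[OF P bound1])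
  have d2: "m2 * real n - c \<le> root_deficit l2 n P" by (rule root_deficit_ge[OF P bound2])
  show ?thesis
  proof (cases "l1 = l2")
    case True
    then have "m1 * real n = 0 \<or> m2 * real n = 0" using distinct m by force
    then show ?thesis using degree_strip_same_root[OF P deg, of l2] True d1 d2 c
      by (auto simp: algebra_simps)
  next
    case False
    then show ?thesis using degree_strip_distinct_roots[OF P deg False] d1 d2
      by (simp add: algebra_simps)
  qed
qed

lemma density_le:
  fixes s \<kappa> N :: real
  assumes "0 \<le> s" "s \<le> N" "1 \<le> \<kappa>" "\<kappa> \<le> N"
  shows "max (1 - s / \<kappa>) 0 \<le> 1 - s / N" "0 \<le> max (1 - s / \<kappa>) 0" "max (1 - s / \<kappa>) 0 \<le> 1"
proof -
  have "s / N \<le> s / \<kappa>" using assms by (intro divide_left_mono) auto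
  moreover have "s / N \<le> 1" using assms by simp
  ultimately show "max (1 - s / \<kappa>) 0 \<le> 1 - s / N" by simp
  show "0 \<le> max (1 - s / \<kappa>) 0" by simp
  show "max (1 - s / \<kappa>) 0 \<le> 1" using assms by simp
qed

section \<open>Determinants of matrices of polynomials\<close>

definition leibniz_poly :: "nat \<Rightarrow> (nat \<Rightarrow> nat \<Rightarrow> complex poly) \<Rightarrow> complex poly" where
  "leibniz_poly n E =
     (\<Sum>\<sigma>\<in>{\<sigma>. \<sigma> permutes {0..<n}}. of_int (sign \<sigma>) * (\<Prod>i\<in>{0..<n}. E i (\<sigma> i)))"

lemma poly_leibniz_poly:
  assumes "M \<in> carrier_mat n n" "\<And>i j. i < n \<Longrightarrow> j < n \<Longrightarrow> poly (E i j) x = M $$ (i,j)"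
  shows "poly (leibniz_poly n E) x = det M"
proof -
  have "poly (leibniz_poly n E) x =
      (\<Sum>\<sigma>\<in>{\<sigma>. \<sigma> permutes {0..<n}}. of_int (sign \<sigma>) * (\<Prod>i\<in>{0..<n}. poly (E i (\<sigma> i)) x))"
    unfolding leibniz_poly_def by (simp add: poly_sum poly_prod)
  also have "\<dots> = (\<Sum>\<sigma>\<in>{\<sigma>. \<sigma> permutes {0..<n}}. of_int (sign \<sigma>) * (\<Prod>i\<in>{0..<n}. M $$ (i, \<sigma> i)))"
    using assms(2) permutes_in_image by (intro sum.cong refl arg_cong2[where f="(*)"] prod.cong) fastforce+
  also have "\<dots> = det M" by (rule det_def'[OF assms(1), symmetric])
  finally show ?thesis .
qed

lemma leibniz_poly_dvd:
  assumes "\<And>\<sigma>. \<sigma> permutes {0..<n} \<Longrightarrow> x dvd (\<Prod>i\<in>{0..<n}. E i (\<sigma> i))"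
  shows "x dvd leibniz_poly n E"
  unfolding leibniz_poly_def using assms by (intro dvd_sum dvd_mult) auto

lemma leibniz_poly_degree:
  assumes "\<And>\<sigma>. \<sigma> permutes {0..<n} \<Longrightarrow> degree (\<Prod>i\<in>{0..<n}. E i (\<sigma> i)) \<le> D"
  shows "degree (leibniz_poly n E) \<le> D"
  unfolding leibniz_poly_def
proof (rule degree_sum_le)
  fix \<sigma> assume \<sigma>: "\<sigma> \<in> {\<sigma>. \<sigma> permutes {0..<n}}"
  have "degree (of_int (sign \<sigma>) * (\<Prod>i\<in>{0..<n}. E i (\<sigma> i)) :: complex poly)
      \<le> degree (\<Prod>i\<in>{0..<n}. E i (\<sigma> i))"
    using degree_mult_le[of "of_int (sign \<sigma>) :: complex poly"] by (simp add: degree_of_int)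
  then show "degree (of_int (sign \<sigma>) * (\<Prod>i\<in>{0..<n}. E i (\<sigma> i)) :: complex poly) \<le> D"
    using assms \<sigma> by (auto intro: order_trans)
qed (simp add: finite_permutations)

lemma prod_power_dvd:
  fixes E :: "nat \<Rightarrow> complex poly"
  assumes "Lo \<subseteq> {..<n}" "\<forall>i\<in>Lo. x dvd E i"
  shows "x ^ card Lo dvd (\<Prod>i\<in>{0..<n}. E i)"
proof -
  have "(\<Prod>i\<in>{0..<n}. E i) = (\<Prod>i\<in>Lo. E i) * (\<Prod>i\<in>{0..<n} - Lo. E i)"
    using assms(1) by (subst prod.subset_diff[of Lo]) (auto simp: atLeast0LessThan)
  moreover have "(\<Prod>i\<in>Lo. x) dvd (\<Prod>i\<in>Lo. E i)" using assms(2) by (intro prod_dvd_prod) auto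
  ultimately show ?thesis by simp
qed

lemma degree_prod_le_card:
  fixes E :: "nat \<Rightarrow> complex poly"
  assumes "Lo \<subseteq> {..<n}" "\<forall>i\<in>Lo. degree (E i) = 0" "\<forall>i<n. degree (E i) \<le> 1"
  shows "degree (\<Prod>i\<in>{0..<n}. E i) \<le> n - card Lo"
proof -
  have fin: "finite Lo" using assms(1) finite_subset by auto
  have "degree (\<Prod>i\<in>{0..<n}. E i) \<le> (\<Sum>i\<in>{0..<n}. degree (E i))"
    using degree_prod_sum_le[of "{0..<n}" E] by (simp add: comp_def)
  also have "\<dots> = (\<Sum>i\<in>Lo. degree (E i)) + (\<Sum>i\<in>{0..<n} - Lo. degree (E i))"
    using assms(1) by (subst sum.subset_diff[of Lo]) (auto simp: atLeast0LessThan)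
  also have "\<dots> = (\<Sum>i\<in>{0..<n} - Lo. degree (E i))" using assms(2) by simp
  also have "\<dots> \<le> (\<Sum>i\<in>{0..<n} - Lo. 1)" using assms(3) by (intro sum_mono) auto
  also have "\<dots> = n - card Lo" using assms(1) fin by (simp add: card_Diff_subset atLeast0LessThan)
  finally show ?thesis .
qed

text \<open>Whether the polynomial x vanishes at the point l of the Riemann sphere; for
  polynomials of degree at most one, "vanishing at \<infinity>" (l = None) means being constant.\<close>
definition has_root_at :: "complex option \<Rightarrow> complex poly \<Rightarrow> bool" where
  "has_root_at l x = (case l of None \<Rightarrow> degree x = 0 | Some \<mu> \<Rightarrow> [:-\<mu>, 1:] dvd x)"

lemma has_root_at_0 [simp]: "has_root_at l 0"
  unfolding has_root_at_def by (auto split: option.splits)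

lemma leibniz_poly_power_dvd:
  fixes E :: "nat \<Rightarrow> nat \<Rightarrow> complex poly"
  assumes many: "\<And>\<sigma>. \<sigma> permutes {0..<n} \<Longrightarrow> (\<forall>i<n. E i (\<sigma> i) \<noteq> 0) \<Longrightarrow>
                 \<exists>Lo\<subseteq>{..<n}. M \<le> real (card Lo) \<and> (\<forall>i\<in>Lo. [:-\<mu>, 1:] dvd E i (\<sigma> i))"
  shows "[:-\<mu>, 1:] ^ nat \<lceil>M\<rceil> dvd leibniz_poly n E"
proof (rule leibniz_poly_dvd)
  fix \<sigma> :: "nat \<Rightarrow> nat" assume \<sigma>: "\<sigma> permutes {0..<n}"
  show "[:-\<mu>, 1:] ^ nat \<lceil>M\<rceil> dvd (\<Prod>i\<in>{0..<n}. E i (\<sigma> i))"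
  proof (cases "\<forall>i<n. E i (\<sigma> i) \<noteq> 0")
    case True
    then obtain Lo where Lo: "Lo \<subseteq> {..<n}" "M \<le> real (card Lo)" "\<forall>i\<in>Lo. [:-\<mu>, 1:] dvd E i (\<sigma> i)"
      using many[OF \<sigma>] by blast
    have "[:-\<mu>, 1:] ^ card Lo dvd (\<Prod>i\<in>{0..<n}. E i (\<sigma> i))"
      using prod_power_dvd[OF Lo(1,3)] .
    moreover have "nat \<lceil>M\<rceil> \<le> card Lo" using Lo(2) by (simp add: ceiling_le_iff nat_le_iff)
    ultimately show ?thesis by (meson dvd_trans le_imp_power_dvd)
  next
    case False
    then have "(\<Prod>i\<in>{0..<n}. E i (\<sigma> i)) = 0" by (auto simp: prod_zero_iff)
    then show ?thesis by (metis dvd_0_right)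
  qed
qed

lemma leibniz_poly_degree_bound:
  fixes E :: "nat \<Rightarrow> nat \<Rightarrow> complex poly"
  assumes deg: "\<And>i j. degree (E i j) \<le> 1"
    and many: "\<And>\<sigma>. \<sigma> permutes {0..<n} \<Longrightarrow> (\<forall>i<n. E i (\<sigma> i) \<noteq> 0) \<Longrightarrow>
                 \<exists>Lo\<subseteq>{..<n}. M \<le> real (card Lo) \<and> (\<forall>i\<in>Lo. degree (E i (\<sigma> i)) = 0)"
    and M: "M \<le> real n"
  shows "real (degree (leibniz_poly n E)) \<le> real n - M"
proof -
  define D where "D = nat \<lfloor>real n - M\<rfloor>"
  have "degree (leibniz_poly n E) \<le> D"
  proof (rule leibniz_poly_degree)
    fix \<sigma> :: "nat \<Rightarrow> nat" assume \<sigma>: "\<sigma> permutes {0..<n}"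
    show "degree (\<Prod>i\<in>{0..<n}. E i (\<sigma> i)) \<le> D"
    proof (cases "\<forall>i<n. E i (\<sigma> i) \<noteq> 0")
      case True
      then obtain Lo where Lo: "Lo \<subseteq> {..<n}" "M \<le> real (card Lo)" "\<forall>i\<in>Lo. degree (E i (\<sigma> i)) = 0"
        using many[OF \<sigma>] by blast
      have "degree (\<Prod>i\<in>{0..<n}. E i (\<sigma> i)) \<le> n - card Lo"
        using degree_prod_le_card[OF Lo(1,3)] deg by simp
      moreover have "n - card Lo \<le> D"
      proof -
        have "card Lo \<le> n" using card_mono[OF _ Lo(1)] by simp
        then have "real (n - card Lo) \<le> real n - M" using Lo(2) by (simp add: of_nat_diff)
        then have "int (n - card Lo) \<le> \<lfloor>real n - M\<rfloor>" by (simp add: le_floor_iff)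
        then show ?thesis unfolding D_def by linarith
      qed
      ultimately show ?thesis by linarith
    next
      case False
      then have "(\<Prod>i\<in>{0..<n}. E i (\<sigma> i)) = 0" by (auto simp: prod_zero_iff)
      then show ?thesis by (metis degree_0 zero_le)
    qed
  qed
  then show ?thesis unfolding D_def using M by linarith
qed

lemma leibniz_poly_endpoint_bound:
  fixes E :: "nat \<Rightarrow> nat \<Rightarrow> complex poly"
  assumes deg: "\<And>i j. degree (E i j) \<le> 1"
    and many: "\<And>\<sigma>. \<sigma> permutes {0..<n} \<Longrightarrow> (\<forall>i<n. E i (\<sigma> i) \<noteq> 0) \<Longrightarrow>
                 \<exists>Lo\<subseteq>{..<n}. m * real n - c \<le> real (card Lo) \<and> (\<forall>i\<in>Lo. has_root_at l (E i (\<sigma> i)))"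
    and M: "m * real n - c \<le> real n"
  shows "endpoint_bound l m c n (leibniz_poly n E)"
proof (cases l)
  case None
  then have "real (degree (leibniz_poly n E)) \<le> real n - (m * real n - c)"
    using leibniz_poly_degree_bound[OF deg _ M] many by (simp add: has_root_at_def)
  then show ?thesis using None by (simp add: endpoint_bound_def algebra_simps)
next
  case (Some \<mu>)
  then show ?thesis
    using leibniz_poly_power_dvd many by (simp add: endpoint_bound_def has_root_at_def)
qed

lemma mat_mult3_entry:
  fixes X Y Z :: "'a::comm_ring_1 mat"
  assumes "X \<in> carrier_mat n n" "Y \<in> carrier_mat n n" "Z \<in> carrier_mat n n" "i < n" "j < n"
  shows "(X * Y * Z) $$ (i,j) = (\<Sum>l<n. X $$ (i,l) * (\<Sum>r<n. Y $$ (l,r) * Z $$ (r,j)))"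
proof -
  have "X * Y * Z = X * (Y * Z)" using assms by (simp add: assoc_mult_mat[of _ n n _ n _ n])
  then show ?thesis using assms
    by (simp add: scalar_prod_def atLeast0LessThan sum_distrib_left mult.assoc)
qed

text \<open>The (i,j) entry of a matrix depending affinely on \<lambda>, as a polynomial in \<lambda>.\<close>
definition entry_poly :: "(complex \<Rightarrow> complex mat) \<Rightarrow> nat \<Rightarrow> nat \<Rightarrow> complex poly" where
  "entry_poly M i j = [: M 0 $$ (i,j), M 1 $$ (i,j) - M 0 $$ (i,j) :]"

lemma degree_entry_poly: "degree (entry_poly M i j) \<le> 1"
  unfolding entry_poly_def by simp

lemma poly_entry_poly:
  assumes "\<And>x. M x $$ (i,j) = a - x * b"
  shows "poly (entry_poly M i j) x = M x $$ (i,j)"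
  unfolding entry_poly_def by (simp add: assms algebra_simps)

section \<open>Fourier coefficients on the unit circle\<close>

text \<open>Continuity on the unit circle: the regularity under which Fourier coefficients are
  linear, bounded and compatible with multiplication by polynomials.\<close>
definition circle_continuous :: "(complex \<Rightarrow> complex) \<Rightarrow> bool" where
  "circle_continuous g = continuous_on (sphere 0 1) g"

lemma circle_continuous_cis: "circle_continuous g \<Longrightarrow> continuous_on S (\<lambda>t. g (cis t))"
  unfolding circle_continuous_def
  by (rule continuous_on_compose2[where f=cis and g=g]) (auto intro: continuous_intros)

lemma circle_continuous_mult: "circle_continuous f \<Longrightarrow> circle_continuous g \<Longrightarrow> circle_continuous (\<lambda>z. f z * g z)"
  unfolding circle_continuous_def by (intro continuous_intros)

lemma circle_continuous_poly: "circle_continuous (\<lambda>z. poly p z)"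
  unfolding circle_continuous_def by (intro continuous_intros)

lemma circle_continuous_powi: "circle_continuous (\<lambda>z. z powi e)"
  unfolding circle_continuous_def by (intro continuous_intros) auto

lemma fourier_integrand_integrable:
  assumes "circle_continuous g"
  shows "(\<lambda>t. g (cis t) * cis (- (of_int m * t))) integrable_on {0..2*pi}"
  by (rule integrable_continuous_interval, intro continuous_intros circle_continuous_cis assms)

lemma fourier_coeff_cong:
  assumes "\<And>z. norm z = 1 \<Longrightarrow> f z = g z"
  shows "fourier_coeff f m = fourier_coeff g m"
proof -
  have "(\<lambda>t. f (cis t) * cis (- (of_int m * t))) = (\<lambda>t. g (cis t) * cis (- (of_int m * t)))"
    by (rule ext) (simp add: assms)
  then show ?thesis unfolding fourier_coeff_def by simp
qed

lemma fourier_coeff_add: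
  assumes "circle_continuous f" "circle_continuous g"
  shows "fourier_coeff (\<lambda>z. f z + g z) m = fourier_coeff f m + fourier_coeff g m"
  unfolding fourier_coeff_def
  using integral_add[OF fourier_integrand_integrable[OF assms(1)] fourier_integrand_integrable[OF assms(2)], of m m]
  by (simp add: distrib_right add_divide_distrib)

lemma fourier_coeff_cmult:
  shows "fourier_coeff (\<lambda>z. c * f z) m = c * fourier_coeff f m"
  unfolding fourier_coeff_def
  by (simp add: mult.assoc integral_mult_right)

lemma fourier_coeff_sum:
  assumes "finite S" "\<And>i. i \<in> S \<Longrightarrow> circle_continuous (f i)"
  shows "fourier_coeff (\<lambda>z. \<Sum>i\<in>S. f i z) m = (\<Sum>i\<in>S. fourier_coeff (f i) m)"
  using assms
proof (induction S rule: finite_induct)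
  case empty
  then show ?case by (simp add: fourier_coeff_def)
next
  case (insert x F)
  have "circle_continuous (\<lambda>z. \<Sum>i\<in>F. f i z)"
    using insert unfolding circle_continuous_def by (intro continuous_on_sum) auto
  then show ?case using insert
    by (simp add: fourier_coeff_add)
qed

lemma fourier_coeff_shift:
  "fourier_coeff (\<lambda>z. z powi e * g z) m = fourier_coeff g (m - e)"
  unfolding fourier_coeff_def
proof -
  have "(\<lambda>t. cis t powi e * g (cis t) * cis (- (of_int m * t))) = (\<lambda>t. g (cis t) * cis (- (of_int (m - e) * t)))"
    by (rule ext) (simp add: cis_power_int cis_mult algebra_simps)
  then show "integral {0..2 * pi} (\<lambda>t. cis t powi e * g (cis t) * cis (- (of_int m * t))) / complex_of_real (2 * pi) =
    integral {0..2 * pi} (\<lambda>t. g (cis t) * cis (- (of_int (m - e) * t))) / complex_of_real (2 * pi)"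
    by simp
qed

lemma fourier_coeff_shift_nat:
  "fourier_coeff (\<lambda>z. z ^ l * g z) m = fourier_coeff g (m - int l)"
  using fourier_coeff_shift[of "int l" g m] by (simp add: power_int_of_nat)

lemma integral_cis_int:
  "integral {0..2*pi} (\<lambda>t. cis (of_int j * t)) = (if j = 0 then complex_of_real (2*pi) else 0)"
proof (cases "j = 0")
  case True
  then show ?thesis by (simp add: scaleR_conv_of_real)
next
  case False
  have "integral {0..2*pi} (\<lambda>t. exp ((\<i> * of_int j) * complex_of_real t)) =
     (exp ((\<i> * of_int j) * of_real (2*pi)) - 1) / (\<i> * of_int j)"
    by (rule integral_exp) (use False in auto)
  also have "exp ((\<i> * of_int j) * of_real (2*pi)) = 1"
  proof -
    have "exp ((\<i> * of_int j) * of_real (2*pi)) = cis (of_int j * (2*pi))"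
      by (simp add: cis_conv_exp algebra_simps)
    also have "\<dots> = 1"
      using cis_multiple_2pi[of "of_int j"] by (simp add: mult.commute)
    finally show ?thesis .
  qed
  finally show ?thesis using False
    by (simp add: cis_conv_exp algebra_simps)
qed

lemma fourier_coeff_powi: "fourier_coeff (\<lambda>z. z powi e) m = (if m = e then 1 else 0)"
proof -
  have "fourier_coeff (\<lambda>z. z powi e) m = fourier_coeff (\<lambda>z. z powi e * 1) m" by simp
  also have "\<dots> = fourier_coeff (\<lambda>z. 1) (m - e)" by (rule fourier_coeff_shift)
  also have "\<dots> = integral {0..2*pi} (\<lambda>t. cis (of_int (e - m) * t)) / complex_of_real (2*pi)"
    unfolding fourier_coeff_def by (simp add: algebra_simps)
  also have "\<dots> = (if m = e then 1 else 0)"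
    using integral_cis_int[of "e - m"] by auto
  finally show ?thesis .
qed

lemma fourier_coeff_bounded:
  assumes "circle_continuous g"
  shows "\<exists>K. \<forall>m. norm (fourier_coeff g m) \<le> K"
proof -
  let ?K = "integral {0..2*pi} (\<lambda>t. norm (g (cis t))) / (2*pi)"
  have "norm (fourier_coeff g m) \<le> ?K" for m
  proof -
    have "norm (integral {0..2*pi} (\<lambda>t. g (cis t) * cis (- (of_int m * t))))
        \<le> integral {0..2*pi} (\<lambda>t. norm (g (cis t)))"
      by (rule integral_norm_bound_integral)
        (auto intro!: fourier_integrand_integrable assms integrable_continuous_interval continuous_intros circle_continuous_cis simp: norm_mult)
    then show ?thesis unfolding fourier_coeff_def
      by (simp add: norm_divide divide_right_mono)
  qed
  then show ?thesis by blast
qed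

lemma fourier_coeff_poly_mult:
  assumes "circle_continuous g"
  shows "fourier_coeff (\<lambda>z. poly B z * g z) m = (\<Sum>l\<le>degree B. coeff B l * fourier_coeff g (m - int l))"
proof -
  have "(\<lambda>z. poly B z * g z) = (\<lambda>z. \<Sum>l\<le>degree B. coeff B l * (z powi int l * g z))"
    by (rule ext) (simp add: poly_altdef sum_distrib_right mult.assoc power_int_of_nat)
  then have "fourier_coeff (\<lambda>z. poly B z * g z) m = fourier_coeff (\<lambda>z. \<Sum>l\<le>degree B. coeff B l * (z powi int l * g z)) m"
    by simp
  also have "\<dots> = (\<Sum>l\<le>degree B. fourier_coeff (\<lambda>z. coeff B l * (z powi int l * g z)) m)"
    using assms unfolding circle_continuous_def by (intro fourier_coeff_sum) (auto simp: circle_continuous_def intro!: continuous_intros)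
  also have "\<dots> = (\<Sum>l\<le>degree B. coeff B l * fourier_coeff g (m - int l))"
    by (simp add: fourier_coeff_cmult fourier_coeff_shift_nat)
  finally show ?thesis .
qed

lemma fourier_coeff_poly:
  "fourier_coeff (\<lambda>z. poly L z) m = (if 0 \<le> m then coeff L (nat m) else 0)"
proof -
  have c1: "circle_continuous (\<lambda>z. z powi 0)" by (rule circle_continuous_powi)
  have "fourier_coeff (\<lambda>z. poly L z) m = fourier_coeff (\<lambda>z. poly L z * z powi 0) m" by simp
  also have "\<dots> = (\<Sum>l\<le>degree L. coeff L l * (if m - int l = 0 then 1 else 0))"
    using fourier_coeff_powi[of 0] by (subst fourier_coeff_poly_mult[OF c1]) simp
  also have "\<dots> = (if 0 \<le> m then coeff L (nat m) else 0)"
  proof (cases "0 \<le> m")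
    case True
    have "(\<Sum>l\<le>degree L. coeff L l * (if m - int l = 0 then 1 else 0)) =
          (\<Sum>l\<le>degree L. if l = nat m then coeff L l else 0)"
      by (intro sum.cong refl) (use True in auto)
    also have "\<dots> = (if nat m \<in> {..degree L} then coeff L (nat m) else 0)"
      by (simp add: sum.delta)
    finally show ?thesis using True by (auto simp: coeff_eq_0)
  next
    case False
    then show ?thesis by (auto intro!: sum.neutral)
  qed
  finally show ?thesis .
qed

lemma fourier_coeff_laurent:
  "fourier_coeff (\<lambda>z. z powi e * poly L z) m = (if 0 \<le> m - e then coeff L (nat (m - e)) else 0)"
  by (simp add: fourier_coeff_shift fourier_coeff_poly)

lemma fourier_coeff_linear_factor:
  assumes "circle_continuous u"
  shows "fourier_coeff (\<lambda>z. (z - r) * u z) m = fourier_coeff u (m - 1) - r * fourier_coeff u m"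
proof -
  have "fourier_coeff (\<lambda>z. (z - r) * u z) m = fourier_coeff (\<lambda>z. poly [:-r, 1:] z * u z) m"
    by simp
  also have "\<dots> = fourier_coeff u (m - 1) - r * fourier_coeff u m"
    by (subst fourier_coeff_poly_mult[OF assms]) auto
  finally show ?thesis .
qed

text \<open>Wiener-Hopf cancellation for one linear factor z - r with |r| > 1: if the
  coefficients of (z - r) u vanish below M, so do those of u.  Otherwise the recursion
  u_{m-1} = r u_m would make the bounded sequence of coefficients grow geometrically.\<close>
lemma fourier_coeff_cancel_outer_root:
  assumes u: "circle_continuous u" and r: "norm r > 1"
    and h: "\<forall>m<M. fourier_coeff (\<lambda>z. (z - r) * u z) m = 0"
  shows "\<forall>m<M. fourier_coeff u m = 0"
proof (intro allI impI)
  fix B assume B: "B < M"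
  obtain K where K: "\<And>m. norm (fourier_coeff u m) \<le> K" using fourier_coeff_bounded[OF u] by blast
  have rec: "fourier_coeff u (m - 1) = r * fourier_coeff u m" if "m < M" for m
    using h that fourier_coeff_linear_factor[OF u, of r m] by auto
  have pw: "fourier_coeff u (B - int j) = r ^ j * fourier_coeff u B" for j
  proof (induction j)
    case 0 then show ?case by simp
  next
    case (Suc j)
    have "fourier_coeff u (B - int (Suc j)) = fourier_coeff u ((B - int j) - 1)" by (simp add: algebra_simps)
    also have "\<dots> = r * fourier_coeff u (B - int j)" by (rule rec) (use B in auto)
    finally show ?case using Suc by simp
  qed
  show "fourier_coeff u B = 0"
  proof (rule ccontr)
    assume nz: "fourier_coeff u B \<noteq> 0"
    then have pos: "norm (fourier_coeff u B) > 0" by simp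
    obtain j where j: "K / norm (fourier_coeff u B) < norm r ^ j"
      using real_arch_pow[OF r] by blast
    have "K < norm r ^ j * norm (fourier_coeff u B)"
      using j pos by (simp add: field_simps)
    also have "\<dots> = norm (fourier_coeff u (B - int j))"
      by (simp add: pw norm_mult norm_power)
    also have "\<dots> \<le> K" by (rule K)
    finally show False by simp
  qed
qed

lemma fourier_coeff_cancel_inner_root:
  assumes u: "circle_continuous u" and r: "norm r < 1"
    and h: "\<forall>m>M. fourier_coeff (\<lambda>z. (z - r) * u z) m = 0"
  shows "\<forall>m\<ge>M. fourier_coeff u m = 0"
proof (intro allI impI)
  fix B assume B: "B \<ge> M"
  obtain K where K: "\<And>m. norm (fourier_coeff u m) \<le> K" using fourier_coeff_bounded[OF u] by blast
  have rec: "fourier_coeff u (m - 1) = r * fourier_coeff u m" if "m > M" for m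
    using h that fourier_coeff_linear_factor[OF u, of r m] by auto
  have pw: "fourier_coeff u B = r ^ j * fourier_coeff u (B + int j)" for j
  proof (induction j)
    case 0 then show ?case by simp
  next
    case (Suc j)
    have "fourier_coeff u (B + int j) = fourier_coeff u ((B + int (Suc j)) - 1)" by (simp add: algebra_simps)
    also have "\<dots> = r * fourier_coeff u (B + int (Suc j))" by (rule rec) (use B in auto)
    finally show ?case using Suc by simp
  qed
  show "fourier_coeff u B = 0"
  proof (rule ccontr)
    assume nz: "fourier_coeff u B \<noteq> 0"
    then have pos: "norm (fourier_coeff u B) > 0" by simp
    have K0: "K > 0" using K[of B] pos by linarith
    obtain j where j: "norm r ^ j < norm (fourier_coeff u B) / K"
      using real_arch_pow_inv[of "norm (fourier_coeff u B) / K" "norm r"] pos K0 r by auto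
    have "norm (fourier_coeff u B) = norm r ^ j * norm (fourier_coeff u (B + int j))"
      by (subst pw[of j]) (simp add: norm_mult norm_power)
    also have "\<dots> \<le> norm r ^ j * K" by (rule mult_left_mono[OF K]) simp
    also have "\<dots> < norm (fourier_coeff u B)" using j K0 by (simp add: field_simps)
    finally show False by simp
  qed
qed

lemma complex_poly_has_root: "degree (B::complex poly) > 0 \<Longrightarrow> \<exists>z. poly B z = 0"
  using fundamental_theorem_of_algebra constant_degree by (metis less_irrefl)

lemma split_root:
  assumes "poly (B::complex poly) r = 0" "B \<noteq> 0"
  obtains B' where "B = [:-r,1:] * B'" "degree B' < degree B" "B' \<noteq> 0"
proof -
  obtain B' where B': "B = [:-r,1:] * B'" using assms poly_eq_0_iff_dvd by (metis dvdE)
  then have "B' \<noteq> 0" using assms by auto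
  have "degree ([:-r,1:] * B') = degree [:-r,1:] + degree B'"
    by (rule degree_mult_eq) (use \<open>B' \<noteq> 0\<close> in auto)
  then have "degree B = 1 + degree B'" using B' by simp
  then show ?thesis using that B' \<open>B' \<noteq> 0\<close> by simp
qed

lemma fourier_coeff_cancel_outer_poly:
  assumes "B \<noteq> 0" "\<forall>z. poly B z = 0 \<longrightarrow> norm z > 1" "circle_continuous u"
    "\<forall>m<M. fourier_coeff (\<lambda>z. poly B z * u z) m = 0"
  shows "\<forall>m<M. fourier_coeff u m = 0"
  using assms
proof (induction "degree B" arbitrary: B u rule: less_induct)
  case less
  show ?case
  proof (cases "degree B = 0")
    case True
    then obtain c where c: "B = [:c:]" by (metis degree_eq_zeroE)
    then have "c \<noteq> 0" using less by auto
    then show ?thesis using less(5) c by (simp add: fourier_coeff_cmult)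
  next
    case False
    then obtain r where r: "poly B r = 0" using complex_poly_has_root by auto
    obtain B' where B': "B = [:-r,1:] * B'" "degree B' < degree B" "B' \<noteq> 0"
      using split_root[OF r less(2)] by blast
    have nr: "norm r > 1" using less(3) r by auto
    have cc: "circle_continuous (\<lambda>z. poly B' z * u z)" by (intro circle_continuous_mult circle_continuous_poly less(4))
    have eq: "(\<lambda>z. poly B z * u z) = (\<lambda>z. (z - r) * (poly B' z * u z))"
      by (rule ext) (simp add: B'(1) algebra_simps)
    have "\<forall>m<M. fourier_coeff (\<lambda>z. poly B' z * u z) m = 0"
      by (rule fourier_coeff_cancel_outer_root[OF cc nr]) (use less(5) eq in auto)
    then show ?thesis
      by (intro less(1)[OF B'(2) B'(3) _ less(4)]) (use less(3) B'(1) in auto)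
  qed
qed

lemma fourier_coeff_cancel_inner_poly:
  assumes "B \<noteq> 0" "\<forall>z. poly B z = 0 \<longrightarrow> norm z < 1" "circle_continuous u"
    "\<forall>m>M. fourier_coeff (\<lambda>z. poly B z * u z) m = 0"
  shows "\<forall>m>M - int (degree B). fourier_coeff u m = 0"
  using assms
proof (induction "degree B" arbitrary: B u M rule: less_induct)
  case less
  show ?case
  proof (cases "degree B = 0")
    case True
    then obtain c where c: "B = [:c:]" by (metis degree_eq_zeroE)
    then have "c \<noteq> 0" using less by auto
    then show ?thesis using less(5) c True by (simp add: fourier_coeff_cmult)
  next
    case False
    then obtain r where r: "poly B r = 0" using complex_poly_has_root by auto
    obtain B' where B': "B = [:-r,1:] * B'" "degree B' < degree B" "B' \<noteq> 0"
      using split_root[OF r less(2)] by blast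
    have "degree ([:-r,1:] * B') = degree [:-r,1:] + degree B'"
      by (rule degree_mult_eq) (use B' in auto)
    then have dB: "degree B = 1 + degree B'" using B' by simp
    have nr: "norm r < 1" using less(3) r by auto
    have cc: "circle_continuous (\<lambda>z. poly B' z * u z)" by (intro circle_continuous_mult circle_continuous_poly less(4))
    have eq: "(\<lambda>z. poly B z * u z) = (\<lambda>z. (z - r) * (poly B' z * u z))"
      by (rule ext) (simp add: B'(1) algebra_simps)
    have "\<forall>m\<ge>M. fourier_coeff (\<lambda>z. poly B' z * u z) m = 0"
      by (rule fourier_coeff_cancel_inner_root[OF cc nr]) (use less(5) eq in auto)
    then have "\<forall>m>M - 1. fourier_coeff (\<lambda>z. poly B' z * u z) m = 0" by auto
    from less(1)[OF B'(2) B'(3) _ less(4) this] less(3) B'(1)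
    have "\<forall>m>M - 1 - int (degree B'). fourier_coeff u m = 0" by auto
    then show ?thesis using dB by auto
  qed
qed

lemma sum_window:
  fixes F :: "nat \<Rightarrow> 'a::comm_monoid_add"
  assumes "a + c < n" "\<And>r. r < n \<Longrightarrow> r < a \<or> a + c < r \<Longrightarrow> F r = 0"
  shows "(\<Sum>r<n. F r) = (\<Sum>t\<le>c. F (a + t))"
proof -
  have "(\<Sum>r<n. F r) = (\<Sum>r\<in>{a..a+c}. F r)"
    by (rule sum.mono_neutral_right) (use assms in auto)
  also have "{a..a+c} = (\<lambda>t. a + t) ` {..c}"
    using image_add_atLeastAtMost[of a 0 c] by (simp add: atLeast0AtMost add.commute)
  also have "(\<Sum>r\<in>(\<lambda>t. a + t) ` {..c}. F r) = (\<Sum>t\<le>c. F (a + t))"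
    by (rule sum.reindex_cong[where l="\<lambda>t. a + t"]) (auto simp: inj_on_def)
  finally show ?thesis .
qed

lemma sum_atMost_rev:
  fixes F :: "nat \<Rightarrow> 'a::comm_monoid_add"
  shows "(\<Sum>t\<le>c. F t) = (\<Sum>t\<le>c. F (c - t))"
  using sum.atLeastAtMost_rev[of F 0 c] by (simp add: atLeast0AtMost)

section \<open>The banded matrices attached to the symbol\<close>

text \<open>The standing setup of the proposition.\<close>
locale toeplitz_symbol =
  fixes A B1 B2 :: "complex poly"
  assumes B1_roots: "\<forall>z. poly B1 z = 0 \<longrightarrow> norm z < 1"
    and B2_roots: "\<forall>z. poly B2 z = 0 \<longrightarrow> norm z > 1"
    and coprime_roots: "\<forall>z. poly A z = 0 \<longrightarrow> poly (B1 * B2) z \<noteq> 0"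
    and q_pos: "qq B1 \<ge> 1"
    and p_pos: "pp A B1 B2 \<ge> 1"
begin

abbreviation "q \<equiv> degree B1"
abbreviation "d \<equiv> degree B2"
abbreviation "p \<equiv> pp A B1 B2"

lemma B1_nonzero: "B1 \<noteq> 0"
proof
  assume "B1 = 0" then have "poly B1 2 = 0" by simp
  then show False using B1_roots by fastforce
qed

lemma B2_nonzero: "B2 \<noteq> 0"
proof
  assume "B2 = 0" then have "poly B2 0 = 0" by simp
  then show False using B2_roots by fastforce
qed

lemma B2_at_0_nonzero: "coeff B2 0 \<noteq> 0"
  using B2_roots by (auto simp: poly_0_coeff_0[symmetric])

lemma B1_lead_nonzero: "coeff B1 q \<noteq> 0"
  using B1_nonzero by simp

lemma B1B2_nonzero_on_circle: "norm z = 1 \<Longrightarrow> poly B1 z \<noteq> 0 \<and> poly B2 z \<noteq> 0"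
  using B1_roots B2_roots by fastforce

lemma degree_A_B1B2: "degree A \<le> p + q" "degree (B1 * B2) \<le> p + q" "degree (B1 * B2) = q + d"
proof -
  show 3: "degree (B1 * B2) = q + d" using B1_nonzero B2_nonzero by (simp add: degree_mult_eq)
  show "degree A \<le> p + q" "degree (B1 * B2) \<le> p + q"
    unfolding pp_def using 3 by auto
qed

definition gsym :: "complex \<Rightarrow> int \<Rightarrow> complex \<Rightarrow> complex" where
  "gsym lam k = (\<lambda>z. z powi (- k) * (symb A B1 B2 z - lam))"

definition Lpoly :: "complex \<Rightarrow> complex poly" where
  "Lpoly lam = A - Polynomial.smult lam (B1 * B2)"

text \<open>The m-th coefficient of z^{-k-q} L_\<lambda>, i.e. a_{m+k} - \<lambda> b_{m+k}.\<close>
definition band_coeff :: "complex \<Rightarrow> int \<Rightarrow> int \<Rightarrow> complex" where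
  "band_coeff lam k m = (if 0 \<le> m + k + int q then coeff (Lpoly lam) (nat (m + k + int q)) else 0)"

lemma circle_continuous_gsym: "circle_continuous (gsym lam k)"
  unfolding circle_continuous_def gsym_def symb_def
  using B1B2_nonzero_on_circle by (intro continuous_intros) auto

lemma gsym_coeff_affine: "fourier_coeff (gsym lam k) m = fourier_coeff (gsym 0 k) m - lam * (if m = - k then 1 else 0)"
proof -
  have "fourier_coeff (gsym lam k) m = fourier_coeff (\<lambda>z. gsym 0 k z + (- lam) * z powi (-k)) m"
    unfolding gsym_def by (simp add: algebra_simps)
  also have "\<dots> = fourier_coeff (gsym 0 k) m + (- lam) * fourier_coeff (\<lambda>z. z powi (-k)) m"
  proof -
    have c: "circle_continuous (\<lambda>z. (- lam) * z powi (-k))" by (intro circle_continuous_mult circle_continuous_powi) (simp add: circle_continuous_def)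
    show ?thesis using fourier_coeff_add[OF circle_continuous_gsym c, of 0 k m] fourier_coeff_cmult[of "- lam" "\<lambda>z. z powi (-k)" m] by simp
  qed
  finally show ?thesis by (simp add: fourier_coeff_powi)
qed

text \<open>The two Laurent identities on the unit circle that make the product matrices banded.\<close>
lemma laurent_B1B2:
  assumes "norm z = 1"
  shows "poly B2 z * (gsym lam k z * (z powi (- int q) * poly B1 z)) = z powi (- (k + int q)) * poly (Lpoly lam) z"
proof -
  have z: "z \<noteq> 0" using assms by auto
  have nz: "poly B1 z \<noteq> 0" "poly B2 z \<noteq> 0" using B1B2_nonzero_on_circle[OF assms] by auto
  have "z powi (- (k + int q)) = z powi (- k) * z powi (- int q)"
    using z by (simp add: power_int_add[symmetric] del: power_int_minus)
  then show ?thesis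
    unfolding gsym_def symb_def Lpoly_def using nz
    by (simp add: field_simps del: power_int_minus)
qed

lemma laurent_B1B2':
  assumes "norm z = 1"
  shows "poly B1 z * (gsym lam k z * poly B2 z) = z powi (- k) * poly (Lpoly lam) z"
proof -
  have nz: "poly B1 z \<noteq> 0" "poly B2 z \<noteq> 0" using B1B2_nonzero_on_circle[OF assms] by auto
  then show ?thesis
    unfolding gsym_def symb_def Lpoly_def
    by (simp add: field_simps del: power_int_minus)
qed

lemma degree_Lpoly: "degree (Lpoly lam) \<le> p + q"
proof -
  have "degree (Lpoly lam) \<le> max (degree A) (degree (Polynomial.smult lam (B1 * B2)))"
    unfolding Lpoly_def by (rule degree_diff_le_max)
  also have "\<dots> \<le> p + q" using degree_A_B1B2 degree_smult_le[of lam "B1 * B2"] by auto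
  finally show ?thesis .
qed

text \<open>Fourier coefficients of g_{\<lambda>,k} z^{-q} B1 and of g_{\<lambda>,k} B2: the entries of the
  half products H T(z^{-q}B1) and H T(B2).\<close>
definition coeff_gB1 :: "complex \<Rightarrow> int \<Rightarrow> int \<Rightarrow> complex" where
  "coeff_gB1 lam k m = fourier_coeff (\<lambda>z. gsym lam k z * (z powi (- int q) * poly B1 z)) m"

definition coeff_gB2 :: "complex \<Rightarrow> int \<Rightarrow> int \<Rightarrow> complex" where
  "coeff_gB2 lam k m = fourier_coeff (\<lambda>z. gsym lam k z * poly B2 z) m"

lemma circle_continuous_gsym_B1: "circle_continuous (\<lambda>z. gsym lam k z * (z powi (- int q) * poly B1 z))"
  by (intro circle_continuous_mult circle_continuous_gsym circle_continuous_powi circle_continuous_poly)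

lemma circle_continuous_gsym_B2: "circle_continuous (\<lambda>z. gsym lam k z * poly B2 z)"
  by (intro circle_continuous_mult circle_continuous_gsym circle_continuous_poly)

lemma coeff_gB1_sum: "coeff_gB1 lam k m = (\<Sum>t\<le>q. coeff B1 t * fourier_coeff (gsym lam k) (m + int q - int t))"
proof -
  have "(\<lambda>z. gsym lam k z * (z powi (- int q) * poly B1 z)) = (\<lambda>z. z powi (- int q) * (poly B1 z * gsym lam k z))"
    by (rule ext) (simp add: algebra_simps)
  then have "coeff_gB1 lam k m = fourier_coeff (\<lambda>z. poly B1 z * gsym lam k z) (m + int q)"
    unfolding coeff_gB1_def by (simp add: fourier_coeff_shift)
  also have "\<dots> = (\<Sum>t\<le>q. coeff B1 t * fourier_coeff (gsym lam k) (m + int q - int t))"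
    by (rule fourier_coeff_poly_mult[OF circle_continuous_gsym])
  finally show ?thesis .
qed

text \<open>Wiener-Hopf: multiplying by B2 (roots outside the disc) gives z^{-k-q} L_\<lambda>, whose
  coefficients vanish below -(k+q); dividing B2 out again preserves this.\<close>
lemma coeff_gB1_zero: "m < - (k + int q) \<Longrightarrow> coeff_gB1 lam k m = 0"
proof -
  assume m: "m < - (k + int q)"
  have "\<forall>m < - (k + int q). fourier_coeff (\<lambda>z. poly B2 z * (gsym lam k z * (z powi (- int q) * poly B1 z))) m = 0"
  proof (intro allI impI)
    fix m :: int assume "m < - (k + int q)"
    have "fourier_coeff (\<lambda>z. poly B2 z * (gsym lam k z * (z powi (- int q) * poly B1 z))) m =
      fourier_coeff (\<lambda>z. z powi (- (k + int q)) * poly (Lpoly lam) z) m"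
      by (rule fourier_coeff_cong) (simp add: laurent_B1B2)
    then show "fourier_coeff (\<lambda>z. poly B2 z * (gsym lam k z * (z powi (- int q) * poly B1 z))) m = 0"
      using \<open>m < - (k + int q)\<close> by (simp add: fourier_coeff_laurent del: power_int_minus)
  qed
  from fourier_coeff_cancel_outer_poly[OF B2_nonzero B2_roots circle_continuous_gsym_B1 this] m show ?thesis
    unfolding coeff_gB1_def by blast
qed

lemma coeff_gB1_band: "(\<Sum>t\<le>d. coeff B2 t * coeff_gB1 lam k (m - int t)) = band_coeff lam k m"
proof -
  have "(\<Sum>t\<le>d. coeff B2 t * coeff_gB1 lam k (m - int t)) =
     fourier_coeff (\<lambda>z. poly B2 z * (gsym lam k z * (z powi (- int q) * poly B1 z))) m"
    unfolding coeff_gB1_def by (rule fourier_coeff_poly_mult[OF circle_continuous_gsym_B1, symmetric])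
  also have "\<dots> = fourier_coeff (\<lambda>z. z powi (- (k + int q)) * poly (Lpoly lam) z) m"
    by (rule fourier_coeff_cong[OF laurent_B1B2])
  also have "\<dots> = fourier_coeff (\<lambda>z. poly (Lpoly lam) z) (m + k + int q)"
    by (subst fourier_coeff_shift) (simp add: algebra_simps)
  also have "\<dots> = band_coeff lam k m"
    by (simp add: fourier_coeff_poly band_coeff_def)
  finally show ?thesis .
qed

lemma coeff_gB2_sum: "coeff_gB2 lam k m = (\<Sum>t\<le>d. coeff B2 t * fourier_coeff (gsym lam k) (m - int t))"
proof -
  have "(\<lambda>z. gsym lam k z * poly B2 z) = (\<lambda>z. poly B2 z * gsym lam k z)"
    by (rule ext) (simp add: algebra_simps)
  then show ?thesis unfolding coeff_gB2_def using fourier_coeff_poly_mult[OF circle_continuous_gsym] by simp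
qed

text \<open>Wiener-Hopf: multiplying by B1 (roots inside the disc) gives z^{-k} L_\<lambda>, whose
  coefficients vanish above p + q - k; dividing B1 out lowers the bound by q.\<close>
lemma coeff_gB2_zero: "m > int p - k \<Longrightarrow> coeff_gB2 lam k m = 0"
proof -
  assume m: "m > int p - k"
  have "\<forall>m>int p + int q - k. fourier_coeff (\<lambda>z. poly B1 z * (gsym lam k z * poly B2 z)) m = 0"
  proof (intro allI impI)
    fix m :: int assume mm: "m > int p + int q - k"
    have "nat (m + k) > p + q" using mm by auto
    then have "coeff (Lpoly lam) (nat (m + k)) = 0" by (intro coeff_eq_0) (use degree_Lpoly[of lam] in linarith)
    moreover have "fourier_coeff (\<lambda>z. poly B1 z * (gsym lam k z * poly B2 z)) m =
      fourier_coeff (\<lambda>z. z powi (- k) * poly (Lpoly lam) z) m"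
      by (rule fourier_coeff_cong) (simp add: laurent_B1B2')
    ultimately show "fourier_coeff (\<lambda>z. poly B1 z * (gsym lam k z * poly B2 z)) m = 0"
      using mm by (simp add: fourier_coeff_laurent del: power_int_minus)
  qed
  from fourier_coeff_cancel_inner_poly[OF B1_nonzero B1_roots circle_continuous_gsym_B2 this] m show ?thesis
    unfolding coeff_gB2_def by auto
qed

lemma coeff_gB2_band: "(\<Sum>t\<le>q. coeff B1 t * coeff_gB2 lam k (m + int q - int t)) = band_coeff lam k m"
proof -
  have "(\<Sum>t\<le>q. coeff B1 t * coeff_gB2 lam k (m + int q - int t)) =
     fourier_coeff (\<lambda>z. poly B1 z * (gsym lam k z * poly B2 z)) (m + int q)"
    unfolding coeff_gB2_def by (rule fourier_coeff_poly_mult[OF circle_continuous_gsym_B2, symmetric])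
  also have "\<dots> = fourier_coeff (\<lambda>z. z powi (- int q) * (poly B1 z * (gsym lam k z * poly B2 z))) m"
    by (simp add: fourier_coeff_shift)
  also have "\<dots> = fourier_coeff (\<lambda>z. z powi (- int q) * (z powi (- k) * poly (Lpoly lam) z)) m"
    by (rule fourier_coeff_cong) (simp add: laurent_B1B2')
  also have "\<dots> = fourier_coeff (\<lambda>z. z powi (- (k + int q)) * poly (Lpoly lam) z) m"
  proof (rule fourier_coeff_cong)
    fix z :: complex assume "norm z = 1"
    then have "z \<noteq> 0" by auto
    then have "z powi (- k + - int q) = z powi (- k) * z powi (- int q)"
      by (rule power_int_add[OF disjI1])
    then show "z powi (- int q) * (z powi (- k) * poly (Lpoly lam) z) = z powi (- (k + int q)) * poly (Lpoly lam) z"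
      by (simp add: algebra_simps del: power_int_minus)
  qed
  also have "\<dots> = fourier_coeff (\<lambda>z. poly (Lpoly lam) z) (m + k + int q)"
    by (subst fourier_coeff_shift) (simp add: algebra_simps)
  also have "\<dots> = band_coeff lam k m"
    by (simp add: fourier_coeff_poly band_coeff_def)
  finally show ?thesis .
qed

text \<open>The lower triangular Toeplitz matrix of B2 and the upper triangular Toeplitz matrix
  of z^{-q} B1, their (nonzero) determinants, the Toeplitz matrix H of g_{\<lambda>,k}, and the
  two products Ma = T(B2) H T(z^{-q}B1) and Mb = T(z^{-q}B1) H T(B2).\<close>
definition lowB2 :: "nat \<Rightarrow> nat \<Rightarrow> complex" where
  "lowB2 i l = (if l \<le> i then coeff B2 (i - l) else 0)"
definition upB1 :: "nat \<Rightarrow> nat \<Rightarrow> complex" where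
  "upB1 r j = (if j \<le> r + q then coeff B1 (r + q - j) else 0)"
definition T_B2 :: "nat \<Rightarrow> complex mat" where
  "T_B2 n = mat n n (\<lambda>(i,j). lowB2 i j)"
definition T_B1 :: "nat \<Rightarrow> complex mat" where
  "T_B1 n = mat n n (\<lambda>(i,j). upB1 i j)"
definition Hmat :: "nat \<Rightarrow> complex \<Rightarrow> int \<Rightarrow> complex mat" where
  "Hmat n lam k = toeplitz n (gsym lam k)"
definition Ma :: "nat \<Rightarrow> complex \<Rightarrow> int \<Rightarrow> complex mat" where
  "Ma n lam k = T_B2 n * Hmat n lam k * T_B1 n"
definition Mb :: "nat \<Rightarrow> complex \<Rightarrow> int \<Rightarrow> complex mat" where
  "Mb n lam k = T_B1 n * Hmat n lam k * T_B2 n"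

lemma carrier_T_H: "T_B2 n \<in> carrier_mat n n" "T_B1 n \<in> carrier_mat n n" "Hmat n lam k \<in> carrier_mat n n"
  by (auto simp: T_B2_def T_B1_def Hmat_def toeplitz_def)

lemma Ma_carrier: "Ma n lam k \<in> carrier_mat n n"
  unfolding Ma_def using carrier_T_H by (intro mult_carrier_mat[of _ n n _ n]) auto

lemma Mb_carrier: "Mb n lam k \<in> carrier_mat n n"
  unfolding Mb_def using carrier_T_H by (intro mult_carrier_mat[of _ n n _ n]) auto

lemma Ma_entry:
  assumes "i < n" "j < n"
  shows "Ma n lam k $$ (i,j) =
    (\<Sum>l<n. lowB2 i l * (\<Sum>r<n. fourier_coeff (gsym lam k) (int l - int r) * upB1 r j))"
proof -
  have "Ma n lam k $$ (i,j) = (\<Sum>l<n. T_B2 n $$ (i,l) * (\<Sum>r<n. Hmat n lam k $$ (l,r) * T_B1 n $$ (r,j)))"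
    unfolding Ma_def by (rule mat_mult3_entry) (use carrier_T_H assms in auto)
  also have "\<dots> = (\<Sum>l<n. lowB2 i l * (\<Sum>r<n. fourier_coeff (gsym lam k) (int l - int r) * upB1 r j))"
    using assms by (intro sum.cong refl) (auto simp: T_B2_def T_B1_def Hmat_def toeplitz_def)
  finally show ?thesis .
qed

lemma Mb_entry:
  assumes "i < n" "j < n"
  shows "Mb n lam k $$ (i,j) =
    (\<Sum>l<n. upB1 i l * (\<Sum>r<n. fourier_coeff (gsym lam k) (int l - int r) * lowB2 r j))"
proof -
  have "Mb n lam k $$ (i,j) = (\<Sum>l<n. T_B1 n $$ (i,l) * (\<Sum>r<n. Hmat n lam k $$ (l,r) * T_B2 n $$ (r,j)))"
    unfolding Mb_def by (rule mat_mult3_entry) (use carrier_T_H assms in auto)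
  also have "\<dots> = (\<Sum>l<n. upB1 i l * (\<Sum>r<n. fourier_coeff (gsym lam k) (int l - int r) * lowB2 r j))"
    using assms by (intro sum.cong refl) (auto simp: T_B2_def T_B1_def Hmat_def toeplitz_def)
  finally show ?thesis .
qed

lemma det_T_B2: "det (T_B2 n) = coeff B2 0 ^ n"
proof -
  have "det (T_B2 n) = prod_list (diag_mat (T_B2 n))"
    by (rule det_lower_triangular[of n]) (auto simp: T_B2_def lowB2_def)
  also have "\<dots> = coeff B2 0 ^ n"
    by (simp add: prod_list_diag_prod T_B2_def lowB2_def)
  finally show ?thesis .
qed

lemma det_T_B1: "det (T_B1 n) = coeff B1 q ^ n"
proof -
  have "det (T_B1 n) = prod_list (diag_mat (T_B1 n))"
    by (rule det_upper_triangular[of _ n]) (auto simp: T_B1_def upB1_def upper_triangular_def coeff_eq_0)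
  also have "\<dots> = coeff B1 q ^ n"
    by (simp add: prod_list_diag_prod T_B1_def upB1_def)
  finally show ?thesis .
qed

lemma det_Ma: "det (Ma n lam k) = coeff B2 0 ^ n * det (Hmat n lam k) * coeff B1 q ^ n"
  unfolding Ma_def using carrier_T_H
  by (simp add: det_mult[of _ n] mult_carrier_mat[of _ n n _ n] det_T_B2 det_T_B1)

lemma det_Mb: "det (Mb n lam k) = coeff B1 q ^ n * det (Hmat n lam k) * coeff B2 0 ^ n"
  unfolding Mb_def using carrier_T_H
  by (simp add: det_mult[of _ n] mult_carrier_mat[of _ n n _ n] det_T_B2 det_T_B1)

abbreviation "gsym_coeff lam k m \<equiv> fourier_coeff (gsym lam k) m"

lemma Ma_right_half:
  assumes "q \<le> j" "j < n"
  shows "(\<Sum>r<n. gsym_coeff lam k (int l - int r) * upB1 r j) = coeff_gB1 lam k (int l - int j)"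
proof -
  have "(\<Sum>r<n. gsym_coeff lam k (int l - int r) * upB1 r j) = (\<Sum>t\<le>q. gsym_coeff lam k (int l - int (j - q + t)) * upB1 (j - q + t) j)"
    by (rule sum_window) (use assms in \<open>auto simp: upB1_def coeff_eq_0\<close>)
  also have "\<dots> = (\<Sum>t\<le>q. coeff B1 t * gsym_coeff lam k (int l - int j + int q - int t))"
    using assms by (intro sum.cong refl) (auto simp: upB1_def of_nat_diff algebra_simps)
  also have "\<dots> = coeff_gB1 lam k (int l - int j)" by (simp add: coeff_gB1_sum)
  finally show ?thesis .
qed

lemma Ma_left_half_band:
  assumes "d \<le> i" "i < n"
  shows "(\<Sum>l<n. lowB2 i l * coeff_gB1 lam k (int l - int j)) = band_coeff lam k (int i - int j)"
proof -
  have "(\<Sum>l<n. lowB2 i l * coeff_gB1 lam k (int l - int j)) = (\<Sum>t\<le>d. lowB2 i (i - d + t) * coeff_gB1 lam k (int (i - d + t) - int j))"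
    by (rule sum_window) (use assms in \<open>auto simp: lowB2_def coeff_eq_0\<close>)
  also have "\<dots> = (\<Sum>t\<le>d. lowB2 i (i - d + (d - t)) * coeff_gB1 lam k (int (i - d + (d - t)) - int j))"
    by (rule sum_atMost_rev)
  also have "\<dots> = (\<Sum>t\<le>d. coeff B2 t * coeff_gB1 lam k (int i - int j - int t))"
    using assms by (intro sum.cong refl) (auto simp: lowB2_def of_nat_diff algebra_simps)
  also have "\<dots> = band_coeff lam k (int i - int j)" by (rule coeff_gB1_band)
  finally show ?thesis .
qed

lemma Ma_left_half_zero:
  assumes "int i - int j < - (k + int q)"
  shows "(\<Sum>l<n. lowB2 i l * coeff_gB1 lam k (int l - int j)) = 0"
  using assms by (intro sum.neutral) (auto simp: lowB2_def coeff_gB1_zero)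

lemma Mb_right_half:
  assumes "j + d < n"
  shows "(\<Sum>r<n. gsym_coeff lam k (int l - int r) * lowB2 r j) = coeff_gB2 lam k (int l - int j)"
proof -
  have "(\<Sum>r<n. gsym_coeff lam k (int l - int r) * lowB2 r j) = (\<Sum>t\<le>d. gsym_coeff lam k (int l - int (j + t)) * lowB2 (j + t) j)"
    by (rule sum_window) (use assms in \<open>auto simp: lowB2_def coeff_eq_0\<close>)
  also have "\<dots> = (\<Sum>t\<le>d. coeff B2 t * gsym_coeff lam k (int l - int j - int t))"
    using assms by (intro sum.cong refl) (auto simp: lowB2_def algebra_simps)
  also have "\<dots> = coeff_gB2 lam k (int l - int j)" by (simp add: coeff_gB2_sum)
  finally show ?thesis .
qed

lemma Mb_left_half_band:
  assumes "i + q < n"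
  shows "(\<Sum>l<n. upB1 i l * coeff_gB2 lam k (int l - int j)) = band_coeff lam k (int i - int j)"
proof -
  have "(\<Sum>l<n. upB1 i l * coeff_gB2 lam k (int l - int j)) = (\<Sum>t\<le>q. upB1 i (i + t) * coeff_gB2 lam k (int (i + t) - int j))"
    by (rule sum_window) (use assms in \<open>auto simp: upB1_def coeff_eq_0\<close>)
  also have "\<dots> = (\<Sum>t\<le>q. upB1 i (i + (q - t)) * coeff_gB2 lam k (int (i + (q - t)) - int j))"
    by (rule sum_atMost_rev)
  also have "\<dots> = (\<Sum>t\<le>q. coeff B1 t * coeff_gB2 lam k (int i - int j + int q - int t))"
    using assms by (intro sum.cong refl) (auto simp: upB1_def of_nat_diff algebra_simps)
  also have "\<dots> = band_coeff lam k (int i - int j)" by (rule coeff_gB2_band)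
  finally show ?thesis .
qed

lemma Mb_left_half_zero:
  assumes "int i - int j > int p - k"
  shows "(\<Sum>l<n. upB1 i l * coeff_gB2 lam k (int l - int j)) = 0"
proof (intro sum.neutral ballI)
  fix l assume "l \<in> {..<n}"
  show "upB1 i l * coeff_gB2 lam k (int l - int j) = 0"
  proof (cases "l < i")
    case True
    then show ?thesis by (auto simp: upB1_def coeff_eq_0)
  next
    case False
    then show ?thesis using assms by (auto simp: coeff_gB2_zero)
  qed
qed

lemma Ma_affine:
  assumes "i < n" "j < n"
  shows "Ma n lam k $$ (i,j) =
    (\<Sum>l<n. lowB2 i l * (\<Sum>r<n. gsym_coeff 0 k (int l - int r) * upB1 r j)) -
    lam * (\<Sum>l<n. lowB2 i l * (\<Sum>r<n. (if int l - int r = - k then 1 else 0) * upB1 r j))"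
  unfolding Ma_entry[OF assms]
  by (subst gsym_coeff_affine) (simp add: algebra_simps sum_subtractf sum_distrib_left)

lemma Mb_affine:
  assumes "i < n" "j < n"
  shows "Mb n lam k $$ (i,j) =
    (\<Sum>l<n. upB1 i l * (\<Sum>r<n. gsym_coeff 0 k (int l - int r) * lowB2 r j)) -
    lam * (\<Sum>l<n. upB1 i l * (\<Sum>r<n. (if int l - int r = - k then 1 else 0) * lowB2 r j))"
  unfolding Mb_entry[OF assms]
  by (subst gsym_coeff_affine) (simp add: algebra_simps sum_subtractf sum_distrib_left)

definition Ea :: "nat \<Rightarrow> int \<Rightarrow> nat \<Rightarrow> nat \<Rightarrow> complex poly" where
  "Ea n k = entry_poly (\<lambda>lam. Ma n lam k)"

definition Eb :: "nat \<Rightarrow> int \<Rightarrow> nat \<Rightarrow> nat \<Rightarrow> complex poly" where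
  "Eb n k = entry_poly (\<lambda>lam. Mb n lam k)"

lemma poly_Ea:
  assumes "i < n" "j < n"
  shows "poly (Ea n k i j) lam = Ma n lam k $$ (i,j)"
  unfolding Ea_def by (rule poly_entry_poly) (rule Ma_affine[OF assms])

lemma poly_Eb:
  assumes "i < n" "j < n"
  shows "poly (Eb n k i j) lam = Mb n lam k $$ (i,j)"
  unfolding Eb_def by (rule poly_entry_poly) (rule Mb_affine[OF assms])

lemma Ea_eqI:
  assumes "\<And>lam. Ma n lam k $$ (i,j) = poly Q lam" "i < n" "j < n"
  shows "Ea n k i j = Q"
proof -
  have "poly (Ea n k i j) = poly Q" by (rule ext) (simp add: poly_Ea assms)
  then show ?thesis by (simp add: poly_eq_poly_eq_iff)
qed

lemma Eb_eqI:
  assumes "\<And>lam. Mb n lam k $$ (i,j) = poly Q lam" "i < n" "j < n"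
  shows "Eb n k i j = Q"
proof -
  have "poly (Eb n k i j) = poly Q" by (rule ext) (simp add: poly_Eb assms)
  then show ?thesis by (simp add: poly_eq_poly_eq_iff)
qed

definition band_poly :: "int \<Rightarrow> int \<Rightarrow> complex poly" where
  "band_poly k D = (if 0 \<le> D + k + int q then [: ca A B1 (D + k), - cb B1 B2 (D + k) :] else 0)"

lemma band_coeff_poly: "band_coeff lam k D = poly (band_poly k D) lam"
  unfolding band_coeff_def band_poly_def Lpoly_def ca_def cb_def by (simp add: algebra_simps)

lemma coeffs_vanish_above_p: "j > int p \<Longrightarrow> ca A B1 j = 0 \<and> cb B1 B2 j = 0"
  unfolding ca_def cb_def using degree_A_B1B2 by (auto intro!: coeff_eq_0)

lemma band_poly_nonzero: "band_poly k D \<noteq> 0 \<Longrightarrow> - (k + int q) \<le> D \<and> D + k \<le> int p"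
proof -
  assume nz: "band_poly k D \<noteq> 0"
  then have "0 \<le> D + k + int q" unfolding band_poly_def by (auto split: if_splits)
  moreover have "D + k \<le> int p"
  proof (rule ccontr)
    assume "\<not> D + k \<le> int p"
    then have "ca A B1 (D + k) = 0 \<and> cb B1 B2 (D + k) = 0" by (intro coeffs_vanish_above_p) auto
    then show False using nz unfolding band_poly_def by (simp split: if_splits)
  qed
  ultimately show ?thesis by auto
qed

lemma band_poly_root:
  assumes "vanish A B1 B2 (D + k) l"
  shows "has_root_at l (band_poly k D)"
proof (cases "0 \<le> D + k + int q")
  case False then show ?thesis by (simp add: band_poly_def has_root_at_0)
next
  case True
  show ?thesis
  proof (cases l)
    case None
    then show ?thesis using assms True by (simp add: band_poly_def has_root_at_def vanish_def)
  next
    case (Some \<mu>)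
    then have e: "ca A B1 (D + k) = cb B1 B2 (D + k) * \<mu>" using assms by (simp add: vanish_def)
    have "[: ca A B1 (D + k), - cb B1 B2 (D + k) :] = Polynomial.smult (- cb B1 B2 (D + k)) [:-\<mu>, 1:]"
      by (simp add: e)
    then have "[:-\<mu>, 1:] dvd [: ca A B1 (D + k), - cb B1 B2 (D + k) :]" by (metis dvd_smult dvd_refl)
    then show ?thesis using Some True by (simp add: band_poly_def has_root_at_def)
  qed
qed

lemma Ma_coeff_gB1:
  assumes "q \<le> j" "i < n" "j < n"
  shows "Ma n lam k $$ (i,j) = (\<Sum>l<n. lowB2 i l * coeff_gB1 lam k (int l - int j))"
  unfolding Ma_entry[OF assms(2,3)] using Ma_right_half[OF assms(1,3)] by simp

lemma Mb_coeff_gB2: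
  assumes "j + d < n" "i < n" "j < n"
  shows "Mb n lam k $$ (i,j) = (\<Sum>l<n. upB1 i l * coeff_gB2 lam k (int l - int j))"
  unfolding Mb_entry[OF assms(2,3)] using Mb_right_half[OF assms(1)] by simp

lemma Ea_zero:
  assumes "q \<le> j" "i < n" "j < n" "int i - int j < - (k + int q)"
  shows "Ea n k i j = 0"
  by (rule Ea_eqI) (use assms in \<open>simp_all add: Ma_coeff_gB1 Ma_left_half_zero\<close>)

lemma Ea_band:
  assumes "q \<le> j" "d \<le> i" "i < n" "j < n"
  shows "Ea n k i j = band_poly k (int i - int j)"
  by (rule Ea_eqI) (use assms in \<open>simp_all add: Ma_coeff_gB1 Ma_left_half_band band_coeff_poly band_poly_def\<close>)

lemma Eb_zero:
  assumes "j + d < n" "i < n" "j < n" "int i - int j > int p - k"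
  shows "Eb n k i j = 0"
  by (rule Eb_eqI) (use assms in \<open>simp_all add: Mb_coeff_gB2 Mb_left_half_zero\<close>)

lemma Eb_band:
  assumes "j + d < n" "i + q < n" "i < n" "j < n"
  shows "Eb n k i j = band_poly k (int i - int j)"
  by (rule Eb_eqI) (use assms in \<open>simp_all add: Mb_coeff_gB2 Mb_left_half_band band_coeff_poly\<close>)

text \<open>\<lambda>1 and \<lambda>2 are chosen so that a_j - \<lambda> b_j vanishes at the two extreme indices, and
  k1, k2 are the lengths of the maximal vanishing runs starting there.\<close>
lemma vanish_lam1: "vanish A B1 B2 (- int q) (lam1 A B1 B2)"
  unfolding vanish_def lam1_def Let_def qq_def by (auto split: option.splits)

lemma vanish_lam2: "vanish A B1 B2 (int p) (lam2 A B1 B2)"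
  unfolding vanish_def lam2_def Let_def by (auto split: option.splits)

lemma kk1_props: "1 \<le> kk1 A B1 B2" "kk1 A B1 B2 \<le> p + q"
  "\<And>j. - int q \<le> j \<Longrightarrow> j \<le> - int q + int (kk1 A B1 B2) - 1 \<Longrightarrow> vanish A B1 B2 j (lam1 A B1 B2)"
proof -
  define S where "S = {\<kappa> \<in> {1..p + q}. \<forall>j \<in> {- int q .. - int q + int \<kappa> - 1}. vanish A B1 B2 j (lam1 A B1 B2)}"
  have kk: "kk1 A B1 B2 = Max S" unfolding kk1_def S_def qq_def by simp
  have fin: "finite S" unfolding S_def by auto
  have "\<forall>j \<in> {- int q .. - int q + int 1 - 1}. vanish A B1 B2 j (lam1 A B1 B2)"
    using vanish_lam1 by simp
  then have "1 \<in> S" unfolding S_def using p_pos by simp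
  then have ne: "S \<noteq> {}" by auto
  have mem: "Max S \<in> S" by (rule Max_in[OF fin ne])
  have "1 \<le> Max S" by (rule Max_ge[OF fin \<open>1 \<in> S\<close>])
  then show "1 \<le> kk1 A B1 B2" using kk by simp
  have memS: "kk1 A B1 B2 \<in> S" using mem kk by simp
  then show "kk1 A B1 B2 \<le> p + q" unfolding S_def by simp
  fix j assume "- int q \<le> j" "j \<le> - int q + int (kk1 A B1 B2) - 1"
  then show "vanish A B1 B2 j (lam1 A B1 B2)" using memS unfolding S_def by simp
qed

lemma kk2_props: "1 \<le> kk2 A B1 B2" "kk2 A B1 B2 \<le> p + q"
  "\<And>j. int p - int (kk2 A B1 B2) + 1 \<le> j \<Longrightarrow> j \<le> int p \<Longrightarrow> vanish A B1 B2 j (lam2 A B1 B2)"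
proof -
  define S where "S = {\<kappa> \<in> {1..p + q}. \<forall>j \<in> {int p - int \<kappa> + 1 .. int p}. vanish A B1 B2 j (lam2 A B1 B2)}"
  have kk: "kk2 A B1 B2 = Max S" unfolding kk2_def S_def qq_def by simp
  have fin: "finite S" unfolding S_def by auto
  have "\<forall>j \<in> {int p - int 1 + 1 .. int p}. vanish A B1 B2 j (lam2 A B1 B2)"
    using vanish_lam2 by simp
  then have "1 \<in> S" unfolding S_def using p_pos by simp
  then have ne: "S \<noteq> {}" by auto
  have mem: "Max S \<in> S" by (rule Max_in[OF fin ne])
  have "1 \<le> Max S" by (rule Max_ge[OF fin \<open>1 \<in> S\<close>])
  then show "1 \<le> kk2 A B1 B2" using kk by simp
  have memS: "kk2 A B1 B2 \<in> S" using mem kk by simp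
  then show "kk2 A B1 B2 \<le> p + q" unfolding S_def by simp
  fix j assume "int p - int (kk2 A B1 B2) + 1 \<le> j" "j \<le> int p"
  then show "vanish A B1 B2 j (lam2 A B1 B2)" using memS unfolding S_def by simp
qed

lemma Ea_exceptional:
  assumes k: "k \<le> int p - 1" and ij: "i < n" "j < n" "i < d \<or> j < q" "Ea n k i j \<noteq> 0"
  shows "- int (p + q + d) \<le> int i - int j"
proof (cases "j < q")
  case False
  then have "\<not> int i - int j < - (k + int q)" using Ea_zero[of j i n k] ij by auto
  then show ?thesis using k by simp
qed simp

lemma Ea_in_band:
  assumes "i < n" "j < n" "\<not> (i < d \<or> j < q)" "Ea n k i j \<noteq> 0"
  shows "- (int q + k) \<le> int i - int j"
  using assms Ea_band[of j i n k] band_poly_nonzero by fastforce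

lemma Ea_root:
  assumes ij: "i < n" "j < n" "\<not> (i < d \<or> j < q)"
    and low: "int i - int j < int (kk1 A B1 B2) - (int q + k)"
  shows "has_root_at (lam1 A B1 B2) (Ea n k i j)"
proof (cases "band_poly k (int i - int j) = 0")
  case False
  then have "- (k + int q) \<le> int i - int j" using band_poly_nonzero by blast
  then have "vanish A B1 B2 (int i - int j + k) (lam1 A B1 B2)"
    using low by (intro kk1_props(3)) auto
  then show ?thesis using Ea_band[of j i n k] ij band_poly_root by simp
qed (use Ea_band[of j i n k] ij in simp)

lemma Eb_exceptional:
  assumes k: "- int q + 1 \<le> k" and ij: "i < n" "j < n" "n \<le> i + q \<or> n \<le> j + d" "Eb n k i j \<noteq> 0"
  shows "- int (p + q + d) \<le> int j - int i"
proof (cases "n \<le> j + d")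
  case False
  then have "\<not> int i - int j > int p - k" using Eb_zero[of j n i k] ij by auto
  then show ?thesis using k by simp
qed (use ij in simp)

lemma Eb_in_band:
  assumes "i < n" "j < n" "\<not> (n \<le> i + q \<or> n \<le> j + d)" "Eb n k i j \<noteq> 0"
  shows "- (int p - k) \<le> int j - int i"
  using assms Eb_band[of j n i k] band_poly_nonzero by fastforce

lemma Eb_root:
  assumes ij: "i < n" "j < n" "\<not> (n \<le> i + q \<or> n \<le> j + d)"
    and low: "int j - int i < int (kk2 A B1 B2) - (int p - k)"
  shows "has_root_at (lam2 A B1 B2) (Eb n k i j)"
proof (cases "band_poly k (int i - int j) = 0")
  case False
  then have "int i - int j + k \<le> int p" using band_poly_nonzero by blast
  then have "vanish A B1 B2 (int i - int j + k) (lam2 A B1 B2)"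
    using low by (intro kk2_props(3)) auto
  then show ?thesis using Eb_band[of j n i k] ij band_poly_root by simp
qed (use Eb_band[of j n i k] ij in simp)

definition err_const :: real where "err_const = real ((d + q) * (1 + p + q + d))"

lemma err_const_nonneg: "err_const \<ge> 0"
  unfolding err_const_def by simp

lemma Ea_many_roots:
  assumes k: "- int q + 1 \<le> k" "k \<le> int p - 1"
    and \<sigma>: "\<sigma> permutes {0..<n}" and nz: "\<forall>i<n. Ea n k i (\<sigma> i) \<noteq> 0"
  shows "\<exists>Lo\<subseteq>{..<n}. m1 A B1 B2 k * real n - err_const \<le> real (card Lo)
           \<and> (\<forall>i\<in>Lo. has_root_at (lam1 A B1 B2) (Ea n k i (\<sigma> i)))"
proof -
  have "card {i. i < n \<and> i < d} \<le> d" "card {j. j < n \<and> j < q} \<le> q"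
    using card_mono[of "{..<d}" "{i. i < n \<and> i < d}"] card_mono[of "{..<q}" "{j. j < n \<and> j < q}"]
    by auto
  then have "\<exists>Lo\<subseteq>{..<n}. max (1 - real_of_int (int q + k) / real_of_int (int (kk1 A B1 B2))) 0 * real n
               - real (d + q) * (1 + real_of_int (int (p + q + d))) \<le> real (card Lo)
           \<and> (\<forall>i\<in>Lo. has_root_at (lam1 A B1 B2) (Ea n k i (\<sigma> i)))"
    using k kk1_props(1) Ea_exceptional Ea_in_band Ea_root
    by (intro permutation_many_good_entries[where \<delta>="\<lambda>i j. int i - int j" and E="Ea n k" and R="\<lambda>i. i < d"
          and Cc="\<lambda>j. j < q", OF \<sigma> nz permutation_displacement_sum[OF \<sigma>]]) auto
  then show ?thesis by (simp add: m1_def qq_def err_const_def algebra_simps)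
qed

lemma Eb_many_roots:
  assumes k: "- int q + 1 \<le> k" "k \<le> int p - 1"
    and \<sigma>: "\<sigma> permutes {0..<n}" and nz: "\<forall>i<n. Eb n k i (\<sigma> i) \<noteq> 0"
  shows "\<exists>Lo\<subseteq>{..<n}. m2 A B1 B2 k * real n - err_const \<le> real (card Lo)
           \<and> (\<forall>i\<in>Lo. has_root_at (lam2 A B1 B2) (Eb n k i (\<sigma> i)))"
proof -
  have "card {i. i < n \<and> n \<le> i + q} \<le> q" "card {j. j < n \<and> n \<le> j + d} \<le> d"
  proof -
    have "{i. i < n \<and> n \<le> i + q} \<subseteq> {n - q..<n}" "{j. j < n \<and> n \<le> j + d} \<subseteq> {n - d..<n}"
      by auto
    then show "card {i. i < n \<and> n \<le> i + q} \<le> q" "card {j. j < n \<and> n \<le> j + d} \<le> d"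
      by (auto dest: card_mono[rotated])
  qed
  moreover have "(\<Sum>i<n. int (\<sigma> i) - int i) = - (\<Sum>i<n. int i - int (\<sigma> i))"
    by (simp add: sum_negf[symmetric])
  then have "(\<Sum>i<n. int (\<sigma> i) - int i) = 0"
    using permutation_displacement_sum[OF \<sigma>] by simp
  ultimately have "\<exists>Lo\<subseteq>{..<n}. max (1 - real_of_int (int p - k) / real_of_int (int (kk2 A B1 B2))) 0 * real n
               - real (q + d) * (1 + real_of_int (int (p + q + d))) \<le> real (card Lo)
           \<and> (\<forall>i\<in>Lo. has_root_at (lam2 A B1 B2) (Eb n k i (\<sigma> i)))"
    using k kk2_props(1) Eb_exceptional Eb_in_band Eb_root
    by (intro permutation_many_good_entries[where \<delta>="\<lambda>i j. int j - int i" and E="Eb n k" and R="\<lambda>i. n \<le> i + q"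
          and Cc="\<lambda>j. n \<le> j + d", OF \<sigma> nz]) auto
  then show ?thesis by (simp add: m2_def err_const_def algebra_simps)
qed

lemma m_bounds:
  assumes k: "- int q + 1 \<le> k" "k \<le> int p - 1"
  shows "0 \<le> m1 A B1 B2 k" "m1 A B1 B2 k \<le> 1" "0 \<le> m2 A B1 B2 k" "m2 A B1 B2 k \<le> 1"
    "m1 A B1 B2 k + m2 A B1 B2 k \<le> 1"
proof -
  let ?N = "real (p + q)"
  have a: "max (1 - real_of_int (int q + k) / real (kk1 A B1 B2)) 0 \<le> 1 - real_of_int (int q + k) / ?N"
     "0 \<le> max (1 - real_of_int (int q + k) / real (kk1 A B1 B2)) 0"
     "max (1 - real_of_int (int q + k) / real (kk1 A B1 B2)) 0 \<le> 1"
    using density_le[of "real_of_int (int q + k)" "real (p + q)" "real (kk1 A B1 B2)"] k kk1_props(1,2) by simp_all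
  have b: "max (1 - real_of_int (int p - k) / real (kk2 A B1 B2)) 0 \<le> 1 - real_of_int (int p - k) / ?N"
     "0 \<le> max (1 - real_of_int (int p - k) / real (kk2 A B1 B2)) 0"
     "max (1 - real_of_int (int p - k) / real (kk2 A B1 B2)) 0 \<le> 1"
    using density_le[of "real_of_int (int p - k)" "real (p + q)" "real (kk2 A B1 B2)"] k kk2_props(1,2) by simp_all
  have m1e: "m1 A B1 B2 k = max (1 - real_of_int (int q + k) / real (kk1 A B1 B2)) 0" unfolding m1_def qq_def by simp
  have m2e: "m2 A B1 B2 k = max (1 - real_of_int (int p - k) / real (kk2 A B1 B2)) 0" unfolding m2_def by simp
  show "0 \<le> m1 A B1 B2 k" "m1 A B1 B2 k \<le> 1" "0 \<le> m2 A B1 B2 k" "m2 A B1 B2 k \<le> 1"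
    using a b m1e m2e by simp_all
  have N: "?N > 0" using p_pos by simp
  have "real_of_int (int q + k) / ?N + real_of_int (int p - k) / ?N = 1"
    using N by (simp add: add_divide_distrib[symmetric])
  then show "m1 A B1 B2 k + m2 A B1 B2 k \<le> 1" using a(1) b(1) m1e m2e by linarith
qed

lemma m_pos_cover:
  assumes "m1 A B1 B2 k > 0" "m2 A B1 B2 k > 0" "- int q \<le> j" "j \<le> int p"
  shows "vanish A B1 B2 j (lam1 A B1 B2) \<or> vanish A B1 B2 j (lam2 A B1 B2)"
proof -
  have k1: "int q + k < int (kk1 A B1 B2)"
  proof (rule ccontr)
    assume "\<not> ?thesis"
    then have "real_of_int (int q + k) / real (kk1 A B1 B2) \<ge> 1"
      using kk1_props(1) by (simp add: le_divide_eq)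
    then show False using assms(1) unfolding m1_def qq_def by simp
  qed
  have k2: "int p - k < int (kk2 A B1 B2)"
  proof (rule ccontr)
    assume "\<not> ?thesis"
    then have "real_of_int (int p - k) / real (kk2 A B1 B2) \<ge> 1"
      using kk2_props(1) by (simp add: le_divide_eq)
    then show False using assms(2) unfolding m2_def by simp
  qed
  show ?thesis
  proof (cases "j \<le> - int q + int (kk1 A B1 B2) - 1")
    case True then show ?thesis using kk1_props(3) assms(3) by blast
  next
    case False then show ?thesis using kk2_props(3) assms(4) k1 k2 by simp
  qed
qed

text \<open>Hence the two endpoints differ when both densities are positive: otherwise
  A - \<lambda> B1 B2 would vanish identically (\<lambda> finite, contradicting coprimality) or
  B1 B2 would (\<lambda> = \<infinity>).\<close>
lemma endpoints_distinct:
  assumes "m1 A B1 B2 k > 0" "m2 A B1 B2 k > 0"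
  shows "lam1 A B1 B2 \<noteq> lam2 A B1 B2"
proof
  assume same: "lam1 A B1 B2 = lam2 A B1 B2"
  have van: "vanish A B1 B2 (int i - int q) (lam1 A B1 B2)" if "i \<le> p + q" for i
    using m_pos_cover[OF assms, of "int i - int q"] that same by auto
  show False
  proof (cases "lam1 A B1 B2")
    case None
    have "coeff (B1 * B2) i = 0" for i
    proof (cases "i \<le> p + q")
      case True then show ?thesis using van[OF True] None by (simp add: vanish_def cb_def)
    qed (use degree_A_B1B2 in \<open>auto intro: coeff_eq_0\<close>)
    then have "B1 * B2 = 0" by (intro poly_eqI) simp
    then show False using B1_nonzero B2_nonzero by simp
  next
    case (Some \<mu>)
    have "coeff A i = coeff (Polynomial.smult \<mu> (B1 * B2)) i" for i
    proof (cases "i \<le> p + q")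
      case True then show ?thesis using van[OF True] Some by (simp add: vanish_def cb_def ca_def)
    qed (use degree_A_B1B2 in \<open>simp add: coeff_eq_0\<close>)
    then have "A = Polynomial.smult \<mu> (B1 * B2)" by (intro poly_eqI) simp
    moreover obtain z where "poly B1 z = 0"
      using complex_poly_has_root q_pos unfolding qq_def by fastforce
    ultimately show False using coprime_roots by simp
  qed
qed

definition charpoly :: "nat \<Rightarrow> int \<Rightarrow> complex poly" where
  "charpoly n k = Polynomial.smult (inverse ((coeff B2 0 * coeff B1 q) ^ n)) (leibniz_poly n (Ea n k))"

lemma poly_charpoly: "poly (charpoly n k) lam = det (Hmat n lam k)"
proof -
  have "poly (leibniz_poly n (Ea n k)) lam = det (Ma n lam k)"
    by (rule poly_leibniz_poly[OF Ma_carrier]) (simp add: poly_Ea)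
  then show ?thesis using B2_at_0_nonzero B1_lead_nonzero
    by (simp add: charpoly_def det_Ma power_mult_distrib field_simps)
qed

lemma charpoly_via_Eb:
  "charpoly n k = Polynomial.smult (inverse ((coeff B2 0 * coeff B1 q) ^ n)) (leibniz_poly n (Eb n k))"
proof -
  have "poly (leibniz_poly n (Eb n k)) lam = det (Mb n lam k)" for lam
    by (rule poly_leibniz_poly[OF Mb_carrier]) (simp add: poly_Eb)
  then have "poly (charpoly n k) = poly (Polynomial.smult (inverse ((coeff B2 0 * coeff B1 q) ^ n))
      (leibniz_poly n (Eb n k)))"
    using B2_at_0_nonzero B1_lead_nonzero by (auto simp: poly_charpoly det_Mb power_mult_distrib field_simps)
  then show ?thesis by (simp add: poly_eq_poly_eq_iff)
qed

lemma degree_charpoly: "degree (charpoly n k) \<le> n"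
proof -
  have "degree (leibniz_poly n (Ea n k)) \<le> n"
    using degree_prod_le_card[of "{}" n] degree_entry_poly
    by (intro leibniz_poly_degree) (simp add: Ea_def)
  then show ?thesis unfolding charpoly_def by (meson degree_smult_le order_trans)
qed

lemma charpoly_endpoint1:
  assumes k: "- int q + 1 \<le> k" "k \<le> int p - 1"
  shows "endpoint_bound (lam1 A B1 B2) (m1 A B1 B2 k) err_const n (charpoly n k)"
proof -
  have "endpoint_bound (lam1 A B1 B2) (m1 A B1 B2 k) err_const n (leibniz_poly n (Ea n k))"
  proof (rule leibniz_poly_endpoint_bound)
    show "degree (Ea n k i j) \<le> 1" for i j unfolding Ea_def by (rule degree_entry_poly)
    show "m1 A B1 B2 k * real n - err_const \<le> real n"
      using m_bounds[OF k] err_const_nonneg mult_left_le_one_le[of "real n" "m1 A B1 B2 k"] by simp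
  qed (rule Ea_many_roots[OF k])
  then show ?thesis unfolding charpoly_def using B2_at_0_nonzero B1_lead_nonzero by (simp add: endpoint_bound_smult)
qed

lemma charpoly_endpoint2:
  assumes k: "- int q + 1 \<le> k" "k \<le> int p - 1"
  shows "endpoint_bound (lam2 A B1 B2) (m2 A B1 B2 k) err_const n (charpoly n k)"
proof -
  have "endpoint_bound (lam2 A B1 B2) (m2 A B1 B2 k) err_const n (leibniz_poly n (Eb n k))"
  proof (rule leibniz_poly_endpoint_bound)
    show "degree (Eb n k i j) \<le> 1" for i j unfolding Eb_def by (rule degree_entry_poly)
    show "m2 A B1 B2 k * real n - err_const \<le> real n"
      using m_bounds[OF k] err_const_nonneg mult_left_le_one_le[of "real n" "m2 A B1 B2 k"] by simp
  qed (rule Eb_many_roots[OF k])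
  then show ?thesis unfolding charpoly_via_Eb using B2_at_0_nonzero B1_lead_nonzero by (simp add: endpoint_bound_smult)
qed

lemma charpoly_strip_both:
  assumes k: "- int q + 1 \<le> k" "k \<le> int p - 1"
  shows "real (degree (strip_root (lam2 A B1 B2) (strip_root (lam1 A B1 B2) (charpoly n k))))
           \<le> mm A B1 B2 k * real n + 2 * err_const"
  unfolding mm_def using m_bounds[OF k] err_const_nonneg
  by (intro degree_strip_both_endpoints degree_charpoly charpoly_endpoint1[OF k]
      charpoly_endpoint2[OF k] endpoints_distinct) auto

lemma charpoly_properties:
  assumes "- int (qq B1) + 1 \<le> k \<and> k \<le> int p - 1 \<and> n \<ge> 1"
  shows "\<exists>P. (\<forall>lam. poly P lam = det (toeplitz n (\<lambda>z. z powi (- k) * (symb A B1 B2 z - lam))))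
    \<and> endpoint_bound (lam1 A B1 B2) (m1 A B1 B2 k) err_const n P
    \<and> endpoint_bound (lam2 A B1 B2) (m2 A B1 B2 k) err_const n P
    \<and> real (degree (strip_root (lam2 A B1 B2) (strip_root (lam1 A B1 B2) P)))
        \<le> mm A B1 B2 k * real n + 2 * err_const"
proof -
  have k: "- int q + 1 \<le> k" "k \<le> int p - 1" using assms by (auto simp: qq_def)
  show ?thesis
    using poly_charpoly charpoly_endpoint1[OF k] charpoly_endpoint2[OF k] charpoly_strip_both[OF k]
    by (intro exI[of _ "charpoly n k"]) (simp add: Hmat_def gsym_def)
qed

end

theorem proposition2p5:
  fixes A B1 B2 :: "complex poly"
  assumes B1_roots: "\<forall>z. poly B1 z = 0 \<longrightarrow> norm z < 1"
    and B2_roots: "\<forall>z. poly B2 z = 0 \<longrightarrow> norm z > 1"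
    and coprime_roots: "\<forall>z. poly A z = 0 \<longrightarrow> poly (B1 * B2) z \<noteq> 0"
    and q_pos: "qq B1 \<ge> 1"
    and p_pos: "pp A B1 B2 \<ge> 1"
    and gcd1: "Gcd {j::int. fourier_coeff (symb A B1 B2) j \<noteq> 0} = 1"
  shows "\<exists>c::real. c \<ge> 0 \<and>
    (\<forall>k::int. \<forall>n::nat. - int (qq B1) + 1 \<le> k \<and> k \<le> int (pp A B1 B2) - 1 \<and> n \<ge> 1 \<longrightarrow>
      (\<exists>P :: complex poly.
         (\<forall>lam. poly P lam = Determinant.det
                 (toeplitz n (\<lambda>z. z powi (- k) * (symb A B1 B2 z - lam)))) \<and>
         (case lam1 A B1 B2 of
            Some l1 \<Rightarrow> [:-l1, 1:] ^ nat \<lceil>m1 A B1 B2 k * real n - c\<rceil> dvd P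
          | None \<Rightarrow> real (degree P) \<le> (1 - m1 A B1 B2 k) * real n + c) \<and>
         (case lam2 A B1 B2 of
            Some l2 \<Rightarrow> [:-l2, 1:] ^ nat \<lceil>m2 A B1 B2 k * real n - c\<rceil> dvd P
          | None \<Rightarrow> real (degree P) \<le> (1 - m2 A B1 B2 k) * real n + c) \<and>
         real (degree (strip_root (lam2 A B1 B2) (strip_root (lam1 A B1 B2) P)))
            \<le> mm A B1 B2 k * real n + 2 * c))"
proof -
  interpret toeplitz_symbol A B1 B2
    using B1_roots B2_roots coprime_roots q_pos p_pos by unfold_locales auto
  show ?thesis
    using err_const_nonneg charpoly_properties unfolding endpoint_bound_def by blast
qed

end
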